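(* Let $F\subset\mathbb{Q}_p$ be a nonempty finite set. Then the uniform probability measure $\delta_F=\frac{1}{\sharp F}\sum_{c\in F}\delta_c$ is a spectral measure if and only if $\sharp F=p^{\sharp I_F}$.
   Context: $p\ge2$ is a prime and $v_p$ is the $p$-adic valuation on $\mathbb{Q}_p$. Characters: $\chi(x)=e^{2\pi i\{x\}}$, where $\{x\}=\sum_{n=v_p(x)}^{-1}a_np^n$ is the fractional part of $x=\sum_{n\ge v_p(x)}a_np^n$ with digits $a_n\in\{0,\dots,p-1\}$. Also $\chi_y(x)=\chi(yx)$. Spectral measure: a Borel probability measure $\mu$ on $\mathbb{Q}_p$ is spectral if there is $\Lambda\subset\mathbb{Q}_p$ such that $\{\chi_\lambda\}_{\lambda\in\Lambda}$ is an orthonormal basis of $L^2(\mu)$. Admissible $p$-orders: $I_F=\{v_p(x-y):x,y\in F,\ x\neq y\}$. *)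

theory Defs
  imports "HOL-Analysis.Analysis" "HOL-Computational_Algebra.Primes"
begin

text \<open>Concrete model of the p-adic numbers: an element x = sum_{n >= v} a_n p^n is represented
by its digit function a :: int => nat (digits < p, vanishing for all sufficiently negative n).
The p-adic expansion is unique, so this is a faithful carrier for Q_p.\<close>

definition Qp :: "nat \<Rightarrow> (int \<Rightarrow> nat) set" where
  "Qp p = {d. (\<forall>n. d n < p) \<and> (\<exists>N. \<forall>n<N. d n = 0)}"

definition ptrunc :: "nat \<Rightarrow> (int \<Rightarrow> nat) \<Rightarrow> int \<Rightarrow> real" where
  "ptrunc p x k = (\<Sum>n\<in>{n. n < k \<and> x n \<noteq> 0}. real (x n) * real p powi n)"

definition pcong :: "nat \<Rightarrow> int \<Rightarrow> real \<Rightarrow> real \<Rightarrow> bool" where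
  "pcong p k r s \<longleftrightarrow> (\<exists>m::int. r - s = of_int m * real p powi k)"

definition psub :: "nat \<Rightarrow> (int \<Rightarrow> nat) \<Rightarrow> (int \<Rightarrow> nat) \<Rightarrow> (int \<Rightarrow> nat)" where
  "psub p x y = (THE z. z \<in> Qp p \<and>
      (\<forall>k. pcong p k (ptrunc p z k) (ptrunc p x k - ptrunc p y k)))"

definition pmul :: "nat \<Rightarrow> (int \<Rightarrow> nat) \<Rightarrow> (int \<Rightarrow> nat) \<Rightarrow> (int \<Rightarrow> nat)" where
  "pmul p x y = (THE z. z \<in> Qp p \<and>
      (\<forall>k. \<exists>K. \<forall>K'\<ge>K. pcong p k (ptrunc p z k) (ptrunc p x K' * ptrunc p y K')))"

definition pval :: "(int \<Rightarrow> nat) \<Rightarrow> int" where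
  "pval x = (THE n. x n \<noteq> 0 \<and> (\<forall>m<n. x m = 0))"

definition pfrac :: "nat \<Rightarrow> (int \<Rightarrow> nat) \<Rightarrow> real" where
  "pfrac p x = ptrunc p x 0"

definition pchi :: "nat \<Rightarrow> (int \<Rightarrow> nat) \<Rightarrow> complex" where
  "pchi p x = cis (2 * pi * pfrac p x)"

definition pchi_y :: "nat \<Rightarrow> (int \<Rightarrow> nat) \<Rightarrow> (int \<Rightarrow> nat) \<Rightarrow> complex" where
  "pchi_y p y x = pchi p (pmul p y x)"

definition admissible_orders :: "nat \<Rightarrow> (int \<Rightarrow> nat) set \<Rightarrow> int set" where
  "admissible_orders p F = {pval (psub p x y) | x y. x \<in> F \<and> y \<in> F \<and> x \<noteq> y}"

text \<open>Inner product of L^2(delta_F), delta_F the uniform probability measure on the finite set F: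
  <f,g> = (1/#F) sum_{c in F} f(c) conj(g(c)).  Functions are identified when they agree on F.\<close>
definition unif_inner :: "(int \<Rightarrow> nat) set \<Rightarrow> ((int \<Rightarrow> nat) \<Rightarrow> complex)
    \<Rightarrow> ((int \<Rightarrow> nat) \<Rightarrow> complex) \<Rightarrow> complex" where
  "unif_inner F f g = (\<Sum>c\<in>F. f c * cnj (g c)) / of_nat (card F)"

text \<open>delta_F is spectral: some Lambda in Q_p such that {chi_lambda} is an orthonormal basis of
L^2(delta_F) (orthonormal, and its span -- finite linear combinations -- is all of L^2(delta_F),
which is finite dimensional).\<close>
definition spectral_unif :: "nat \<Rightarrow> (int \<Rightarrow> nat) set \<Rightarrow> bool" where
  "spectral_unif p F \<longleftrightarrow> (\<exists>\<Lambda>. \<Lambda> \<subseteq> Qp p \<and>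
     (\<forall>\<mu>\<in>\<Lambda>. \<forall>\<nu>\<in>\<Lambda>. unif_inner F (pchi_y p \<mu>) (pchi_y p \<nu>) = (if \<mu> = \<nu> then 1 else 0)) \<and>
     (\<forall>f :: (int \<Rightarrow> nat) \<Rightarrow> complex. \<exists>\<Lambda>0 c. finite \<Lambda>0 \<and> \<Lambda>0 \<subseteq> \<Lambda> \<and>
        (\<forall>x\<in>F. f x = (\<Sum>\<mu>\<in>\<Lambda>0. c \<mu> * pchi_y p \<mu> x))))"

end

theory Submission
  imports Defs "HOL-Computational_Algebra.Polynomial_Factorial"
begin

text \<open>Elements of \<open>\<rat>\<^sub>p\<close> are digit functions; fix \<open>B \<le> 0\<close> below which all digits in sight vanish and
  let \<open>N x\<close> be the integer formed by the digits of \<open>x\<close> at the levels \<open>B, \<dots>, -B - 1\<close>. Then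
  \<open>\<chi>\<^sub>\<lambda>(x) = exp(2\<pi>i N \<lambda> N x / p\<^sup>M)\<close> with \<open>M = -2B\<close>, so \<open>\<langle>\<chi>\<^sub>\<lambda>, \<chi>\<^sub>\<lambda>\<^sub>'\<rangle>\<close> is a sum over \<open>F\<close> of
  \<open>p\<^sup>M\<close>-th roots of unity whose exponent \<open>(N \<lambda> - N \<lambda>') N x\<close> depends, modulo \<open>p\<^sup>M\<close>, only on the
  digits of \<open>x\<close> up to the level \<open>g = -v(\<lambda> - \<lambda>') - 1\<close>, the digit at \<open>g\<close> entering with a factor
  \<open>p\<^sup>M\<^sup>-\<^sup>1\<close> times a unit.

  If \<open>F\<close> splits fully at \<open>g\<close> (below any branch every digit occurs at \<open>g\<close>), rotating that digit
  multiplies the sum by a nontrivial root of unity, so it vanishes. Conversely, since the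
  \<open>p\<^sup>M\<close>-th cyclotomic polynomial is irreducible (Eisenstein), the multiplicities of a vanishing sum
  of \<open>p\<^sup>M\<close>-th roots of unity are \<open>p\<^sup>M\<^sup>-\<^sup>1\<close>-periodic, which forces \<open>F\<close> to split fully at \<open>g\<close>.

  Hence for a spectrum \<open>\<Lambda>\<close>, \<open>F\<close> splits fully at each of the levels \<open>S = {-v(\<lambda> - \<lambda>') - 1}\<close>, and
  \<open>#\<Lambda> \<le> p\<^bsup>#S\<^esup> \<le> #F \<le> #\<Lambda>\<close>; equality makes \<open>F\<close> a full tree on the levels \<open>S\<close>, so
  \<open>S = I\<^sub>F\<close>. Conversely, if \<open>#F = p\<^bsup>#I\<^sub>F\<^esup>\<close> then \<open>F\<close> is a full tree on the levels \<open>I\<^sub>F\<close>,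
  and the digit patterns supported on the levels \<open>{-d - 1 | d \<in> I\<^sub>F}\<close> form a spectrum.\<close>

section \<open>Cyclotomic polynomials of prime-power order\<close>

lemma freshmans_dream_int_poly:
  fixes A B :: "int poly"
  assumes "prime p"
  shows "[:int p:] dvd (A + B) ^ p - (A ^ p + B ^ p)"
proof -
  have p0: "p > 0" using assms prime_gt_0_nat by blast
  have "(A + B) ^ p = (\<Sum>k\<le>p. of_nat (p choose k) * A ^ k * B ^ (p - k))"
    by (rule binomial_ring)
  also have "{..p} = insert p (insert 0 {1..<p})" using p0 by auto
  finally have "(A + B) ^ p - (A ^ p + B ^ p)
      = (\<Sum>k\<in>{1..<p}. of_nat (p choose k) * (A ^ k * B ^ (p - k)))"
    using p0 by (simp add: mult.assoc)
  moreover have "[:int p:] dvd (of_nat (p choose k) :: int poly)" if "k \<in> {1..<p}" for k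
    using that dvd_choose_prime[of k p] assms by (auto simp: of_nat_poly)
  ultimately show ?thesis by (auto intro!: dvd_sum dvd_mult2)
qed

lemma X_plus_1_power_prime_power_cong:
  assumes "prime p"
  shows "[:int p:] dvd [:1,1:] ^ (p ^ j) - (monom 1 (p ^ j) + 1)"
proof (induction j)
  case 0
  show ?case by (simp add: monom_Suc one_pCons monom_0)
next
  case (Suc j)
  define Y Z W where "Y = [:1::int,1:] ^ (p ^ j)" and "Z = monom (1::int) (p ^ j) + 1"
    and "W = monom (1::int) (p ^ Suc j) + 1"
  have "Y - Z dvd Y ^ p - Z ^ p" unfolding power_diff_sumr2 by simp
  then have "[:int p:] dvd Y ^ p - Z ^ p" using Suc unfolding Y_def Z_def by (rule dvd_trans[rotated])
  moreover have "[:int p:] dvd Z ^ p - W"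
    using freshmans_dream_int_poly[OF assms, of "monom 1 (p ^ j)" 1]
    by (simp add: Z_def W_def monom_power power_Suc2 mult.commute del: power_Suc)
  ultimately have "[:int p:] dvd (Y ^ p - Z ^ p) + (Z ^ p - W)" by (rule dvd_add)
  moreover have "(Y ^ p - Z ^ p) + (Z ^ p - W) = [:1,1:] ^ (p ^ Suc j) - W"
    by (simp add: Y_def power_mult[symmetric] power_Suc2 del: power_Suc)
  ultimately show ?case unfolding W_def by metis
qed

text \<open>\<open>cyclotomic_pp p q = (X^(p q) - 1) / (X^q - 1)\<close>; for \<open>p\<close> prime and \<open>q = p^j\<close> this is
  the cyclotomic polynomial of order \<open>p^(j+1)\<close>.\<close>

definition cyclotomic_pp :: "nat \<Rightarrow> nat \<Rightarrow> int poly" where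
  "cyclotomic_pp p q = (\<Sum>k<p. monom 1 (k * q))"

lemma coeff_cyclotomic_pp:
  assumes "q > 0"
  shows "coeff (cyclotomic_pp p q) i = (if q dvd i \<and> i div q < p then 1 else 0)"
proof -
  have "coeff (cyclotomic_pp p q) i = (\<Sum>k<p. if k = i div q then (if q dvd i then 1 else 0) else 0)"
    unfolding cyclotomic_pp_def coeff_sum coeff_monom by (rule sum.cong) (use assms in auto)
  then show ?thesis by (simp add: sum.delta')
qed

lemma degree_cyclotomic_pp:
  assumes "q > 0" "p > 0"
  shows "degree (cyclotomic_pp p q) = (p - 1) * q" and "lead_coeff (cyclotomic_pp p q) = 1"
proof -
  have top: "coeff (cyclotomic_pp p q) ((p - 1) * q) = 1"
    using assms by (simp add: coeff_cyclotomic_pp)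
  have "coeff (cyclotomic_pp p q) i = 0" if "(p - 1) * q < i" for i
  proof -
    have "\<not> (q dvd i \<and> i div q < p)"
    proof
      assume "q dvd i \<and> i div q < p"
      then have "i = i div q * q" "i div q \<le> p - 1" by auto
      then have "i \<le> (p - 1) * q" by (metis mult_le_mono1)
      then show False using that by simp
    qed
    then show ?thesis using assms by (simp add: coeff_cyclotomic_pp)
  qed
  then have "degree (cyclotomic_pp p q) \<le> (p - 1) * q" by (intro degree_le) auto
  moreover have "(p - 1) * q \<le> degree (cyclotomic_pp p q)" using top by (intro le_degree) simp
  ultimately show "degree (cyclotomic_pp p q) = (p - 1) * q" by simp
  then show "lead_coeff (cyclotomic_pp p q) = 1" using top by simp
qed

lemma monom_1_pcompose: "monom 1 n \<circ>\<^sub>p (r :: int poly) = r ^ n"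
  by (induction n) (simp_all add: monom_Suc pcompose_pCons monom_0)

text \<open>The Eisenstein shape of \<open>cyclotomic_pp p (p^j) (X + 1)\<close> modulo \<open>p\<close>: since
  \<open>(X + 1)^(p^i) = X^(p^i) + 1\<close> mod \<open>p\<close>, multiplying the polynomial by \<open>(X + 1)^(p^j) - 1\<close> gives
  \<open>X^(p^(j+1))\<close> mod \<open>p\<close>.\<close>

lemma cyclotomic_pp_shift_cong:
  assumes "prime p"
  shows "[:int p:] dvd cyclotomic_pp p (p ^ j) \<circ>\<^sub>p [:1,1:] - monom 1 ((p - 1) * p ^ j)"
proof -
  define q where "q = p ^ j"
  define Y where "Y = [:1::int,1:] ^ q"
  define \<Phi> where "\<Phi> = cyclotomic_pp p q \<circ>\<^sub>p [:1,1:]"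
  have \<Phi>: "\<Phi> = (\<Sum>k<p. Y ^ k)"
    unfolding \<Phi>_def cyclotomic_pp_def pcompose_sum monom_1_pcompose Y_def
    by (simp add: power_mult[symmetric] mult.commute)
  have "[:int p:] dvd Y - 1 - monom 1 q"
    using X_plus_1_power_prime_power_cong[OF assms, of j] by (simp add: Y_def q_def algebra_simps)
  then have "[:int p:] dvd (Y - 1 - monom 1 q) * \<Phi>" by (rule dvd_mult2)
  moreover have "[:int p:] dvd (Y - 1) * \<Phi> - monom 1 (p * q)"
  proof -
    have "(Y - 1) * \<Phi> = [:1,1:] ^ (p * q) - 1"
      unfolding \<Phi> power_diff_1_eq[symmetric] Y_def by (simp add: power_mult[symmetric] mult.commute)
    then have "(Y - 1) * \<Phi> - monom 1 (p * q) = [:1,1:] ^ (p ^ Suc j) - (monom 1 (p ^ Suc j) + 1)"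
      by (simp add: q_def)
    then show ?thesis
      using X_plus_1_power_prime_power_cong[OF assms, of "Suc j"] by simp
  qed
  ultimately have "[:int p:] dvd (Y - 1) * \<Phi> - monom 1 (p * q) - (Y - 1 - monom 1 q) * \<Phi>"
    by (rule dvd_diff[rotated])
  moreover have "p * q = q + (p - 1) * q"
    using prime_gt_0_nat[OF assms] by (cases p) auto
  then have "monom (1::int) (p * q) = monom 1 q * monom 1 ((p - 1) * q)"
    by (simp add: mult_monom)
  ultimately have "[:int p:] dvd monom 1 q * (\<Phi> - monom 1 ((p - 1) * q))"
    by (simp add: algebra_simps)
  then have "\<forall>i. int p dvd coeff (monom 1 q * (\<Phi> - monom 1 ((p - 1) * q))) (q + i)"
    unfolding const_poly_dvd_iff by blast
  then have "[:int p:] dvd \<Phi> - monom 1 ((p - 1) * q)"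
    unfolding const_poly_dvd_iff by (simp add: coeff_monom_mult)
  then show ?thesis unfolding \<Phi>_def q_def .
qed

lemma prime_not_dvd_coeff_mult:
  fixes A B :: "int poly"
  assumes "prime P" and "\<not> P dvd coeff A i" "\<not> P dvd coeff B j"
    and "\<And>i'. i' < i \<Longrightarrow> P dvd coeff A i'" "\<And>j'. j' < j \<Longrightarrow> P dvd coeff B j'"
  shows "\<not> P dvd coeff (A * B) (i + j)"
proof
  assume dvd_coeff: "P dvd coeff (A * B) (i + j)"
  have split: "coeff (A * B) (i + j) = coeff A i * coeff B j
      + (\<Sum>k\<in>{..i + j} - {i}. coeff A k * coeff B (i + j - k))"
    unfolding coeff_mult by (subst sum.remove[of _ i]) simp_all
  have rest: "P dvd (\<Sum>k\<in>{..i + j} - {i}. coeff A k * coeff B (i + j - k))"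
  proof (rule dvd_sum)
    fix k assume "k \<in> {..i + j} - {i}"
    then consider "k < i" | "i + j - k < j" by fastforce
    then show "P dvd coeff A k * coeff B (i + j - k)"
      by cases (simp_all add: assms(4) assms(5) dvd_mult dvd_mult2)
  qed
  have "P dvd coeff A i * coeff B j"
    using dvd_coeff unfolding split dvd_add_left_iff[OF rest] .
  then show False using assms(1-3) by (simp add: prime_dvd_mult_iff)
qed

lemma eisenstein_criterion:
  fixes A B :: "int poly"
  assumes "prime P" and f: "A * B = f"
    and "\<And>i. i < degree f \<Longrightarrow> P dvd coeff f i" "\<not> P dvd lead_coeff f" "\<not> P\<^sup>2 dvd coeff f 0"
  shows "degree A = 0 \<or> degree B = 0"
proof (rule ccontr)
  assume "\<not> (degree A = 0 \<or> degree B = 0)"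
  then have A0: "A \<noteq> 0" "degree A > 0" and B0: "B \<noteq> 0" "degree B > 0" by auto
  have "\<not> P dvd lead_coeff A * lead_coeff B" using assms(4) unfolding f[symmetric] lead_coeff_mult .
  then have "\<not> P dvd lead_coeff A" "\<not> P dvd lead_coeff B" by auto
  then obtain i j where i: "\<not> P dvd coeff A i" "\<And>i'. i' < i \<Longrightarrow> P dvd coeff A i'"
    and j: "\<not> P dvd coeff B j" "\<And>j'. j' < j \<Longrightarrow> P dvd coeff B j'"
    using exists_least_iff[of "\<lambda>i. \<not> P dvd coeff A i"] exists_least_iff[of "\<lambda>i. \<not> P dvd coeff B i"]
    by blast
  have "\<not> P dvd coeff f (i + j)"
    using prime_not_dvd_coeff_mult[OF assms(1) i(1) j(1) i(2) j(2)] f by simp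
  then have "degree f \<le> i + j" using assms(3) by (meson not_le)
  moreover have "i \<le> degree A" "j \<le> degree B"
    using i(1) j(1) by (auto intro: le_degree)
  moreover have "degree f = degree A + degree B" using f A0 B0 by (metis degree_mult_eq)
  ultimately have "P dvd coeff A 0" "P dvd coeff B 0" using A0 B0 i(2) j(2) by auto
  then have "P\<^sup>2 dvd coeff f 0"
    unfolding f[symmetric] coeff_mult_0 power2_eq_square by (rule mult_dvd_mono)
  then show False using assms(5) by simp
qed

lemma cyclotomic_pp_no_proper_factor:
  assumes "prime p" and f: "A * B = cyclotomic_pp p (p ^ j)"
  shows "degree A = 0 \<or> degree B = 0"
proof -
  let ?\<Phi> = "cyclotomic_pp p (p ^ j)"
  have p0: "p > 0" using assms(1) prime_gt_0_nat by blast
  have deg: "degree ?\<Phi> = (p - 1) * p ^ j" "lead_coeff ?\<Phi> = 1"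
    using degree_cyclotomic_pp[of "p ^ j" p] p0 by auto
  have "degree (A \<circ>\<^sub>p [:1,1:]) = 0 \<or> degree (B \<circ>\<^sub>p [:1,1:]) = 0"
  proof (rule eisenstein_criterion)
    show "prime (int p)" using assms(1) by simp
    show "A \<circ>\<^sub>p [:1,1:] * B \<circ>\<^sub>p [:1,1:] = ?\<Phi> \<circ>\<^sub>p [:1,1:]"
      by (simp add: f[symmetric] pcompose_mult)
    show "int p dvd coeff (?\<Phi> \<circ>\<^sub>p [:1,1:]) i" if "i < degree (?\<Phi> \<circ>\<^sub>p [:1,1:])" for i
    proof -
      have "i \<noteq> (p - 1) * p ^ j" using that deg by (simp add: degree_pcompose)
      moreover have "int p dvd coeff (?\<Phi> \<circ>\<^sub>p [:1,1:] - monom 1 ((p - 1) * p ^ j)) i"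
        using cyclotomic_pp_shift_cong[OF assms(1), of j] unfolding const_poly_dvd_iff ..
      ultimately show ?thesis by (simp add: coeff_monom)
    qed
    show "\<not> int p dvd lead_coeff (?\<Phi> \<circ>\<^sub>p [:1,1:])"
      using deg prime_gt_1_nat[OF assms(1)] by (simp add: lead_coeff_comp)
    have "coeff (?\<Phi> \<circ>\<^sub>p [:1,1:]) 0 = int p"
      unfolding poly_0_coeff_0[symmetric] poly_pcompose cyclotomic_pp_def poly_sum
      by (simp add: poly_monom)
    then show "\<not> (int p)\<^sup>2 dvd coeff (?\<Phi> \<circ>\<^sub>p [:1,1:]) 0"
      using prime_gt_1_nat[OF assms(1)] by (simp add: power2_eq_square zdvd_mult_cancel1)
  qed
  then show ?thesis by (simp add: degree_pcompose)
qed

section \<open>Vanishing sums of roots of unity\<close>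

definition unity_root :: "nat \<Rightarrow> int \<Rightarrow> complex" where
  "unity_root P m = cis (2 * pi * of_int m / of_nat P)"

lemma unity_root_add: "unity_root P (a + b) = unity_root P a * unity_root P b"
  by (simp add: unity_root_def cis_mult add_divide_distrib distrib_left)

lemma cnj_unity_root: "cnj (unity_root P a) = unity_root P (- a)"
  by (simp add: unity_root_def cis_cnj)

lemma unity_root_mult_cnj: "unity_root P a * cnj (unity_root P b) = unity_root P (a - b)"
  by (simp add: cnj_unity_root unity_root_add[symmetric])

lemma unity_root_power: "unity_root P a ^ n = unity_root P (a * int n)"
proof -
  have "real n * (2 * pi * of_int a / of_nat P) = 2 * pi * of_int (a * int n) / of_nat P"
    by (simp add: mult_ac)
  then show ?thesis by (simp only: unity_root_def Complex.DeMoivre)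
qed

lemma unity_root_eq_1_iff:
  assumes "P > 0"
  shows "unity_root P a = 1 \<longleftrightarrow> int P dvd a"
proof
  assume "unity_root P a = 1"
  then have "Re (unity_root P a) = 1" by simp
  then have "cos (2 * pi * of_int a / of_nat P) = 1" by (simp add: unity_root_def)
  then obtain t :: int where "2 * pi * of_int a / of_nat P = of_int t * 2 * pi"
    using cos_one_2pi_int by blast
  then have "(of_int a :: real) = of_int (t * int P)" using assms by (simp add: field_simps)
  then show "int P dvd a" by (simp only: of_int_eq_iff) simp
next
  assume "int P dvd a"
  then obtain t where "a = int P * t" by blast
  then have "2 * pi * of_int a / of_nat P = 2 * pi * of_int t" using assms by simp
  then show "unity_root P a = 1" unfolding unity_root_def by (simp add: cis_multiple_2pi)
qed

lemma unity_root_cong: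
  assumes "P > 0" "int P dvd a - b"
  shows "unity_root P a = unity_root P b"
proof -
  have "unity_root P (a - b) = 1" using assms unity_root_eq_1_iff by blast
  then show ?thesis using unity_root_add[of P "a - b" b] by simp
qed

lemma unity_root_mod:
  assumes "P > 0"
  shows "unity_root P a = unity_root P (a mod int P)"
  using assms by (intro unity_root_cong) (simp_all add: dvd_minus_mod)

definition ipoly :: "int poly \<Rightarrow> complex \<Rightarrow> complex" where
  "ipoly f z = poly (map_poly of_int f) z"

lemma ipoly_add: "ipoly (f + g) z = ipoly f z + ipoly g z"
proof -
  have "map_poly (of_int :: int \<Rightarrow> complex) (f + g) = map_poly of_int f + map_poly of_int g"
    by (rule poly_eqI) (simp add: coeff_map_poly)
  then show ?thesis by (simp add: ipoly_def)
qed

lemma ipoly_mult: "ipoly (f * g) z = ipoly f z * ipoly g z"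
proof -
  have "map_poly (of_int :: int \<Rightarrow> complex) (f * g) = map_poly of_int f * map_poly of_int g"
    by (rule poly_eqI) (simp add: coeff_map_poly coeff_mult of_int_sum)
  then show ?thesis by (simp add: ipoly_def)
qed

lemma ipoly_smult: "ipoly (smult c f) z = of_int c * ipoly f z"
  by (simp add: ipoly_def map_poly_smult)

lemma ipoly_monom: "ipoly (monom c n) z = of_int c * z ^ n"
  by (simp add: ipoly_def map_poly_monom poly_monom)

lemma ipoly_const: "ipoly [:c:] z = of_int c"
  by (simp add: ipoly_def map_poly_pCons)

lemma ipoly_0 [simp]: "ipoly 0 z = 0"
  by (simp add: ipoly_def)

lemma ipoly_sum: "ipoly (sum f A) z = (\<Sum>i\<in>A. ipoly (f i) z)"
  by (induction A rule: infinite_finite_induct) (auto simp: ipoly_add)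

lemma ipoly_cyclotomic_pp_root:
  assumes "prime p"
  shows "ipoly (cyclotomic_pp p (p ^ j)) (unity_root (p ^ Suc j) 1) = 0"
proof -
  have p0: "p > 0" using assms prime_gt_0_nat by blast
  define w where "w = unity_root p 1"
  have "unity_root (p ^ Suc j) 1 ^ (k * p ^ j) = w ^ k" for k
  proof -
    have "2 * pi * real (k * p ^ j) / real (p ^ Suc j) = 2 * pi * real k / real p"
      using p0 by (simp add: field_simps)
    then have "unity_root (p ^ Suc j) (int (k * p ^ j)) = unity_root p (int k)"
      by (simp only: unity_root_def of_int_of_nat_eq)
    then show ?thesis by (simp add: w_def unity_root_power)
  qed
  then have "ipoly (cyclotomic_pp p (p ^ j)) (unity_root (p ^ Suc j) 1) = (\<Sum>k<p. w ^ k)"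
    by (simp add: cyclotomic_pp_def ipoly_sum ipoly_monom)
  moreover have "w ^ p = 1" using p0 by (simp add: w_def unity_root_power unity_root_eq_1_iff)
  moreover have "w \<noteq> 1" using prime_gt_1_nat[OF assms] by (simp add: w_def unity_root_eq_1_iff)
  ultimately show ?thesis using power_diff_1_eq[of w p] by simp
qed

lemma gauss_factor_of_smult_eq_mult:
  fixes \<Phi> R Q :: "int poly"
  assumes "smult c \<Phi> = R * Q" "c \<noteq> 0" "content \<Phi> = 1"
  shows "\<exists>A B. A * B = \<Phi> \<and> degree A = degree R"
proof -
  define H where "H = primitive_part R * primitive_part Q"
  have "content R * content Q = \<bar>c\<bar>"
    using arg_cong[OF assms(1), of content] assms(3) by (simp add: content_smult content_mult)
  moreover have "R * Q = smult (content R * content Q) H"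
  proof -
    have "R * Q = smult (content R) (primitive_part R) * smult (content Q) (primitive_part Q)"
      by simp
    then show ?thesis by (simp only: H_def mult_smult_left mult_smult_right smult_smult mult.commute)
  qed
  ultimately have "smult \<bar>c\<bar> (smult (sgn c) \<Phi>) = smult \<bar>c\<bar> H"
    using assms(1) by (simp add: abs_mult_sgn)
  then have "smult (sgn c) \<Phi> = H"
    using assms(2) smult_cancel[of "\<bar>c\<bar>" "smult (sgn c) \<Phi>" H] by simp
  moreover have "sgn c * sgn c = 1" using assms(2) by (cases "c > 0") simp_all
  then have "\<Phi> = smult (sgn c) (smult (sgn c) \<Phi>)" by simp
  ultimately have "\<Phi> = smult (sgn c) (primitive_part R) * primitive_part Q"
    by (simp only: H_def mult_smult_left)
  moreover have "degree (smult (sgn c) (primitive_part R)) = degree R"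
    using assms(2) by (simp add: degree_primitive_part sgn_0_0)
  ultimately show ?thesis by metis
qed

text \<open>Minimality is argued via a nonzero vanishing polynomial of least degree, which divides
  \<open>\<Phi>\<close> up to a constant (pseudo-division), hence is a factor of \<open>\<Phi>\<close> by Gauss' lemma.\<close>

lemma degree_le_of_common_root:
  fixes \<Phi> R :: "int poly"
  assumes monic: "lead_coeff \<Phi> = 1"
    and irr: "\<And>A B. A * B = \<Phi> \<Longrightarrow> degree A = 0 \<or> degree B = 0"
    and root: "ipoly \<Phi> z = 0" and R: "R \<noteq> 0" "ipoly R z = 0"
  shows "degree \<Phi> \<le> degree R"
proof -
  let ?V = "\<lambda>d. \<exists>R0. R0 \<noteq> 0 \<and> ipoly R0 z = 0 \<and> degree R0 = d"
  define d where "d = (LEAST d. ?V d)"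
  have "?V (degree R)" using R by blast
  then have "?V d" and "d \<le> degree R" unfolding d_def by (auto intro: LeastI Least_le)
  have d_min: "\<not> ?V d'" if "d' < d" for d'
    using not_less_Least[of d' ?V] that unfolding d_def by blast
  from \<open>?V d\<close> obtain R0 where R0: "R0 \<noteq> 0" "ipoly R0 z = 0" "degree R0 = d" by blast
  obtain Q T where div: "pseudo_divmod \<Phi> R0 = (Q, T)" by fastforce
  define c where "c = lead_coeff R0 ^ (Suc (degree \<Phi>) - degree R0)"
  have eq: "smult c \<Phi> = R0 * Q + T" and T: "T = 0 \<or> degree T < degree R0"
    using pseudo_divmod[OF R0(1) div] unfolding c_def by auto
  have "ipoly T z = 0"
    using arg_cong[OF eq, of "\<lambda>f. ipoly f z"] by (simp add: ipoly_smult ipoly_add ipoly_mult root R0)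
  have "T = 0"
  proof (rule ccontr)
    assume "T \<noteq> 0"
    then have "degree T < d" using T R0(3) by simp
    then show False using d_min \<open>ipoly T z = 0\<close> \<open>T \<noteq> 0\<close> by blast
  qed
  moreover have "c \<noteq> 0" using R0(1) by (simp add: c_def)
  moreover have "content \<Phi> = 1"
  proof -
    have "content \<Phi> dvd 1" using content_dvd_coeff[of \<Phi> "degree \<Phi>"] monic by simp
    then have "\<bar>content \<Phi>\<bar> = 1" by simp
    then show ?thesis using normalize_content[of \<Phi>] by simp
  qed
  ultimately obtain A B where AB: "A * B = \<Phi>" "degree A = d"
    using gauss_factor_of_smult_eq_mult[of c \<Phi> R0 Q] eq R0(3) by auto
  have "d \<noteq> 0"
  proof
    assume "d = 0"
    then obtain c where "R0 = [:c:]" using R0(3) degree_0_id[of R0] by metis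
    then show False using R0 by (simp add: ipoly_const)
  qed
  then have "degree B = 0" using irr[OF AB(1)] AB(2) by simp
  moreover have "A \<noteq> 0" "B \<noteq> 0" using AB(1) monic by auto
  ultimately have "degree \<Phi> = d" using AB degree_mult_eq[of A B] by simp
  then show ?thesis using \<open>d \<le> degree R\<close> by simp
qed

lemma dvd_of_common_root:
  fixes \<Phi> R :: "int poly"
  assumes monic: "lead_coeff \<Phi> = 1"
    and irr: "\<And>A B. A * B = \<Phi> \<Longrightarrow> degree A = 0 \<or> degree B = 0"
    and root: "ipoly \<Phi> z = 0" and R: "ipoly R z = 0"
  shows "\<Phi> dvd R"
proof -
  have \<Phi>0: "\<Phi> \<noteq> 0" using monic by auto
  obtain Q T where div: "pseudo_divmod R \<Phi> = (Q, T)" by fastforce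
  have eq: "R = \<Phi> * Q + T" and T: "T = 0 \<or> degree T < degree \<Phi>"
    using pseudo_divmod[OF \<Phi>0 div] monic by auto
  have "ipoly T z = 0"
    using arg_cong[OF eq, of "\<lambda>f. ipoly f z"] by (simp add: ipoly_add ipoly_mult root R)
  then have "T = 0"
    using T degree_le_of_common_root[OF monic irr root] by (meson not_le)
  then show ?thesis using eq by simp
qed

lemma coeff_cyclotomic_pp_mult:
  assumes q: "q > 0" and Q: "degree Q < q" and i: "i < p * q"
  shows "coeff (cyclotomic_pp p q * Q) i = coeff Q (i mod q)"
proof -
  have summand: "(if i < k * q then 0 else coeff Q (i - k * q))
      = (if k = i div q then coeff Q (i mod q) else 0)" for k
  proof (cases "k = i div q")
    case True
    moreover have "\<not> i < i div q * q" by (simp add: not_less div_times_less_eq_dividend)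
    ultimately show ?thesis by (simp add: minus_div_mult_eq_mod)
  next
    case False
    then consider "k < i div q" | "i div q < k" by linarith
    then show ?thesis
    proof cases
      case 1
      then have "(k + 1) * q \<le> i div q * q" by (intro mult_right_mono) auto
      then have "(k + 1) * q \<le> i" using div_times_less_eq_dividend[of i q] by (rule le_trans)
      then have "q \<le> i - k * q" by (simp add: algebra_simps)
      then show ?thesis using False Q by (simp add: coeff_eq_0)
    next
      case 2
      then have "(i div q + 1) * q \<le> k * q" by (intro mult_right_mono) auto
      moreover have "i < (i div q + 1) * q" using q by (simp add: dividend_less_div_times)
      ultimately show ?thesis using False by simp
    qed
  qed
  have "i div q < p" using i q by (simp add: div_less_iff_less_mult mult.commute)
  moreover have "coeff (cyclotomic_pp p q * Q) i = (\<Sum>k<p. if i < k * q then 0 else coeff Q (i - k * q))"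
    by (simp add: cyclotomic_pp_def sum_distrib_right coeff_sum coeff_monom_mult cong: if_cong)
  ultimately show ?thesis unfolding summand by (simp add: sum.delta')
qed

text \<open>The sum polynomial \<open>\<Sum> n r X^r\<close> is a multiple \<open>\<Phi> Q\<close> of the cyclotomic polynomial, with
  \<open>deg Q < p^j\<close>; its coefficients are those of \<open>Q\<close> repeated \<open>p\<close> times.\<close>

lemma unity_root_sum_eq_0_periodic:
  fixes n :: "nat \<Rightarrow> int"
  assumes p: "prime p"
    and sum0: "(\<Sum>r<p ^ Suc j. of_int (n r) * unity_root (p ^ Suc j) (int r)) = 0"
    and r: "r < p ^ Suc j"
  shows "n r = n (r mod p ^ j)"
proof -
  define P q where "P = p ^ Suc j" and "q = p ^ j"
  have p0: "p > 0" and q0: "q > 0" using prime_gt_0_nat[OF p] by (auto simp: q_def)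
  have Pq: "P = p * q" by (simp add: P_def q_def)
  define R where "R = (\<Sum>r<P. monom (n r) r)"
  have coeff_R: "coeff R i = (if i < P then n i else 0)" for i
    unfolding R_def coeff_sum coeff_monom by (simp add: sum.delta' if_distrib)
  have deg: "degree (cyclotomic_pp p q) = (p - 1) * q" "lead_coeff (cyclotomic_pp p q) = 1"
    using degree_cyclotomic_pp[OF q0 p0] by auto
  have "ipoly R (unity_root P 1) = 0"
    using sum0 by (simp add: R_def P_def ipoly_sum ipoly_monom unity_root_power)
  then have "cyclotomic_pp p q dvd R"
    using dvd_of_common_root[OF deg(2)[unfolded q_def] cyclotomic_pp_no_proper_factor[OF p]
        ipoly_cyclotomic_pp_root[OF p]]
    by (simp add: q_def P_def)
  then obtain Q where R: "R = cyclotomic_pp p q * Q" by (elim dvdE)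
  have "degree Q < q"
  proof (cases "Q = 0")
    case False
    have "degree R \<le> P - 1" by (rule degree_le) (auto simp: coeff_R)
    moreover have "cyclotomic_pp p q \<noteq> 0" using deg(2) by auto
    then have "degree R = (p - 1) * q + degree Q"
      using R False deg(1) degree_mult_eq by metis
    moreover have "(p - 1) * q + q = P" using Pq p0 by (cases p) simp_all
    ultimately show ?thesis using q0 by linarith
  qed (simp add: q0)
  then have "coeff R i = coeff Q (i mod q)" if "i < P" for i
    using R coeff_cyclotomic_pp_mult[OF q0] that Pq by simp
  moreover have "r mod q < P"
    using Pq p0 mod_less_divisor[OF q0, of r] by (simp add: less_le_trans)
  ultimately have "coeff R r = coeff R (r mod q)" using r by (simp add: P_def)
  then show ?thesis using r \<open>r mod q < P\<close> by (simp add: coeff_R P_def q_def)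
qed

section \<open>Digit expansions\<close>

definition vanishes_below :: "(int \<Rightarrow> nat) \<Rightarrow> int \<Rightarrow> bool" where
  "vanishes_below x B \<longleftrightarrow> (\<forall>n<B. x n = 0)"

definition digit_block :: "nat \<Rightarrow> int \<Rightarrow> (int \<Rightarrow> nat) \<Rightarrow> nat \<Rightarrow> int" where
  "digit_block p B x L = (\<Sum>i<L. int (x (B + int i)) * int p ^ i)"

lemma digit_block_0 [simp]: "digit_block p B x 0 = 0" by (simp add: digit_block_def)
lemma digit_block_Suc: "digit_block p B x (Suc L) = digit_block p B x L + int (x (B + int L)) * int p ^ L"
  by (simp add: digit_block_def)

lemma digit_block_add: "digit_block p B x (L + L') = digit_block p B x L + int p ^ L * digit_block p (B + int L) x L'"
proof (induction L')
  case (Suc L')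
  show ?case using Suc by (simp add: digit_block_Suc algebra_simps power_add)
qed simp

lemma digit_block_nonneg: "0 \<le> digit_block p B x L"
  unfolding digit_block_def by (intro sum_nonneg) simp

lemma digit_block_less:
  assumes "\<forall>n. x n < p"
  shows "digit_block p B x L < int p ^ L"
proof (induction L)
  case 0 then show ?case by simp
next
  case (Suc L)
  have "x (B + int L) < p" using assms by simp
  then have "int (x (B + int L)) \<le> int p - 1" by linarith
  then have "int (x (B + int L)) * int p ^ L \<le> (int p - 1) * int p ^ L"
    by (intro mult_right_mono) auto
  then show ?case using Suc by (simp add: digit_block_Suc algebra_simps)
qed

lemma digit_block_dvd_diff:
  assumes "L \<le> L'"
  shows "int p ^ L dvd digit_block p B x L' - digit_block p B x L"
proof -
  have "L' = L + (L' - L)" using assms by simp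
  then have "digit_block p B x L' = digit_block p B x L + int p ^ L * digit_block p (B + int L) x (L' - L)"
    by (metis digit_block_add)
  then show ?thesis by simp
qed

lemma digit_block_mult_dvd_diff:
  assumes "L \<le> L'"
  shows "int p ^ L dvd digit_block p B x L' * digit_block p B' y L' - digit_block p B x L * digit_block p B' y L"
proof -
  obtain a where "digit_block p B x L' - digit_block p B x L = int p ^ L * a"
    using digit_block_dvd_diff[OF assms] by (rule dvdE)
  then have a: "digit_block p B x L' = digit_block p B x L + int p ^ L * a" by simp
  obtain b where "digit_block p B' y L' - digit_block p B' y L = int p ^ L * b"
    using digit_block_dvd_diff[OF assms] by (rule dvdE)
  then have b: "digit_block p B' y L' = digit_block p B' y L + int p ^ L * b" by simp
  have "digit_block p B x L' * digit_block p B' y L' - digit_block p B x L * digit_block p B' y L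
      = int p ^ L * (a * digit_block p B' y L + digit_block p B x L * b + int p ^ L * a * b)"
    unfolding a b by (simp add: algebra_simps)
  then show ?thesis by simp
qed

lemma digit_block_cong:
  assumes "\<And>i. i < L \<Longrightarrow> x (B + int i) = y (B + int i)"
  shows "digit_block p B x L = digit_block p B y L"
  unfolding digit_block_def using assms by (intro sum.cong) auto

lemma digit_block_eq_0_digit:
  assumes "digit_block p B x L = 0" "p > 0" "i < L"
  shows "x (B + int i) = 0"
proof -
  have "(\<Sum>i<L. int (x (B + int i)) * int p ^ i) = 0" using assms(1) by (simp add: digit_block_def)
  then have "\<forall>i\<in>{..<L}. int (x (B + int i)) * int p ^ i = 0"
    by (subst sum_nonneg_eq_0_iff[symmetric]) auto
  then show ?thesis using assms(2,3) by simp
qed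

lemma powi_add_nat:
  assumes "p > 0" "j \<ge> 0"
  shows "real p powi (B + j) = real p ^ nat j * real p powi B"
proof -
  have "real p powi (B + j) = real p powi j * real p powi B"
    using assms by (simp add: power_int_add)
  moreover have "real p powi j = real p ^ nat j"
    using assms(2) by (metis int_nat_eq power_int_of_nat)
  ultimately show ?thesis by simp
qed

lemma ptrunc_eq_digit_block:
  assumes "vanishes_below x B" "p > 0"
  shows "ptrunc p x K = of_int (digit_block p B x (nat (K - B))) * real p powi B"
proof -
  define L where "L = nat (K - B)"
  have sub: "{n. n < K \<and> x n \<noteq> 0} \<subseteq> {B..<K}"
    using assms(1) unfolding vanishes_below_def by (auto simp: not_less[symmetric])
  have "ptrunc p x K = (\<Sum>n\<in>{B..<K}. real (x n) * real p powi n)"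
    unfolding ptrunc_def by (rule sum.mono_neutral_left) (use sub in auto)
  also have "{B..<K} = (\<lambda>i. B + int i) ` {..<L}"
  proof (rule set_eqI, rule iffI)
    fix n assume "n \<in> {B..<K}"
    then show "n \<in> (\<lambda>i. B + int i) ` {..<L}"
      unfolding L_def by (intro image_eqI[where x = "nat (n - B)"]) auto
  qed (auto simp: L_def)
  also have "(\<Sum>n\<in>(\<lambda>i. B + int i) ` {..<L}. real (x n) * real p powi n)
      = (\<Sum>i<L. real (x (B + int i)) * real p powi (B + int i))"
    by (subst sum.reindex) (auto simp: inj_on_def)
  also have "\<dots> = (\<Sum>i<L. real (x (B + int i)) * real p ^ i) * real p powi B"
    unfolding sum_distrib_right using assms(2)
    by (intro sum.cong) (simp_all add: powi_add_nat)
  also have "(\<Sum>i<L. real (x (B + int i)) * real p ^ i) = of_int (digit_block p B x L)"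
    unfolding digit_block_def by simp
  finally show ?thesis unfolding L_def .
qed

lemma pcong_scaledI:
  assumes "p > 0" "int p ^ nat (k - B) dvd (a - b)"
  shows "pcong p k (of_int a * real p powi B) (of_int b * real p powi B)"
proof -
  obtain t where t: "a - b = int p ^ nat (k - B) * t" using assms(2) by blast
  show ?thesis
  proof (cases "B \<le> k")
    case True
    have "real p powi k = real p ^ nat (k - B) * real p powi B"
      using powi_add_nat[OF assms(1), of "k - B" B] True by simp
    then have "of_int a * real p powi B - of_int b * real p powi B = of_int t * real p powi k"
      using arg_cong[OF t, of real_of_int] by (simp add: algebra_simps)
    then show ?thesis unfolding pcong_def by blast
  next
    case False
    then have t': "a - b = t" using t by simp
    have "real p powi B = real p ^ nat (B - k) * real p powi k"
      using powi_add_nat[OF assms(1), of "B - k" k] False by simp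
    then have "of_int a * real p powi B - of_int b * real p powi B
        = of_int (t * int p ^ nat (B - k)) * real p powi k"
      using arg_cong[OF t', of real_of_int] by (simp add: algebra_simps)
    then show ?thesis unfolding pcong_def by blast
  qed
qed

lemma pcong_scaledD:
  assumes "p > 0" "B \<le> k" "pcong p k (of_int a * real p powi B) (of_int b * real p powi B)"
  shows "int p ^ nat (k - B) dvd (a - b)"
proof -
  obtain m :: int where m: "of_int a * real p powi B - of_int b * real p powi B = of_int m * real p powi k"
    using assms(3) unfolding pcong_def by blast
  have "real p powi k = real p ^ nat (k - B) * real p powi B"
    using powi_add_nat[OF assms(1), of "k - B" B] assms(2) by simp
  then have "(of_int (a - b) - of_int m * real p ^ nat (k - B)) * real p powi B = 0"
    using m by (simp add: algebra_simps)
  moreover have "real p powi B \<noteq> 0" using assms(1) by simp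
  ultimately have "of_int (a - b) - of_int m * real p ^ nat (k - B) = 0" by (simp only: mult_eq_0_iff) simp
  then have "of_int (a - b) = (of_int (m * int p ^ nat (k - B)) :: real)" by simp
  then have "a - b = m * int p ^ nat (k - B)" by (simp only: of_int_eq_iff)
  then show ?thesis by simp
qed

lemma pcong_trans: "pcong p k a b \<Longrightarrow> pcong p k b c \<Longrightarrow> pcong p k a c"
proof -
  assume "pcong p k a b" "pcong p k b c"
  then obtain m1 m2 :: int where "a - b = of_int m1 * real p powi k" "b - c = of_int m2 * real p powi k"
    unfolding pcong_def by blast
  then have "a - c = of_int (m1 + m2) * real p powi k" by (simp add: algebra_simps)
  then show ?thesis unfolding pcong_def by blast
qed

lemma pcong_sym: "pcong p k a b \<Longrightarrow> pcong p k b a"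
proof -
  assume "pcong p k a b"
  then obtain m :: int where "a - b = of_int m * real p powi k" unfolding pcong_def by blast
  then have "b - a = of_int (- m) * real p powi k" by (simp add: algebra_simps)
  then show ?thesis unfolding pcong_def by blast
qed

lemma digit_div_mod_cong:
  fixes m m' :: int
  assumes "p > 0" "int p ^ Suc i dvd (m' - m)"
  shows "(m div int p ^ i) mod int p = (m' div int p ^ i) mod int p"
proof -
  obtain t where t: "m' - m = int p ^ Suc i * t" using assms(2) by blast
  then have "m' = m + int p ^ i * (int p * t)" by (simp add: algebra_simps)
  then have "m' div int p ^ i = m div int p ^ i + int p * t"
    using assms(1) by simp
  then show ?thesis by simp
qed

lemma sum_digits_eq_mod:
  fixes m :: int
  assumes "p > 0"
  shows "(\<Sum>i<L. ((m div int p ^ i) mod int p) * int p ^ i) = m mod int p ^ L"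
proof (induction L)
  case 0 then show ?case by simp
next
  case (Suc L)
  have "m mod int p ^ Suc L = m mod (int p ^ L * int p)" by (simp add: mult.commute)
  also have "\<dots> = int p ^ L * (m div int p ^ L mod int p) + m mod int p ^ L"
    using mod_mult2_eq'[of m "p ^ L" p] by simp
  finally show ?case using Suc by (simp add: algebra_simps)
qed

lemma exists_digits_coherent:
  fixes A :: "nat \<Rightarrow> int"
  assumes p: "p > 0" and A: "\<And>L L'. L \<le> L' \<Longrightarrow> int p ^ L dvd A L' - A L"
  shows "\<exists>z. (\<forall>n. z n < p) \<and> vanishes_below z B \<and> (\<forall>L. int p ^ L dvd digit_block p B z L - A L)"
proof -
  define z where "z n = (if n < B then 0 else nat ((A (Suc (nat (n - B))) div int p ^ nat (n - B)) mod int p))" for n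
  have zd: "\<forall>n. z n < p"
  proof
    fix n
    have "(A (Suc (nat (n - B))) div int p ^ nat (n - B)) mod int p < int p" using p by simp
    then show "z n < p" unfolding z_def using p by (auto simp: nat_less_iff)
  qed
  have zl: "vanishes_below z B" unfolding vanishes_below_def z_def by simp
  have "int p ^ L dvd digit_block p B z L - A L" for L
  proof -
    have "digit_block p B z L = (\<Sum>i<L. ((A L div int p ^ i) mod int p) * int p ^ i)"
      unfolding digit_block_def
    proof (intro sum.cong refl)
      fix i assume i: "i \<in> {..<L}"
      have "int (z (B + int i)) = (A (Suc i) div int p ^ i) mod int p"
        unfolding z_def using p by simp
      also have "\<dots> = (A L div int p ^ i) mod int p"
        using i by (intro digit_div_mod_cong[OF p] A) auto
      finally show "int (z (B + int i)) * int p ^ i = (A L div int p ^ i) mod int p * int p ^ i" by simp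
    qed
    also have "\<dots> = A L mod int p ^ L" by (rule sum_digits_eq_mod[OF p])
    finally have "digit_block p B z L - A L = - (int p ^ L * (A L div int p ^ L))"
      by (simp add: minus_div_mult_eq_mod[symmetric] algebra_simps)
    then show ?thesis by simp
  qed
  then show ?thesis using zd zl by blast
qed

lemma eq_of_dvd_diff_bounded:
  fixes a b P :: int
  assumes "0 \<le> a" "a < P" "0 \<le> b" "b < P" "P dvd a - b"
  shows "a = b"
proof (rule ccontr)
  assume "a \<noteq> b"
  then have "\<bar>P\<bar> \<le> \<bar>a - b\<bar>" using dvd_imp_le_int assms(5) by simp
  then show False using assms(1-4) by linarith
qed

lemma digits_eqI:
  assumes p: "p > 0" and zd: "\<forall>n. z n < p" and zd': "\<forall>n. z' n < p"
    and zl: "vanishes_below z B" and zl': "vanishes_below z' B"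
    and dv: "\<And>L. int p ^ L dvd digit_block p B z L - digit_block p B z' L"
  shows "z = z'"
proof -
  have eqS: "digit_block p B z L = digit_block p B z' L" for L
    using eq_of_dvd_diff_bounded[OF digit_block_nonneg digit_block_less[OF zd] digit_block_nonneg digit_block_less[OF zd'] dv] .
  have "z (B + int L) = z' (B + int L)" for L
    using eqS[of "Suc L"] eqS[of L] p by (simp add: digit_block_Suc)
  show ?thesis
  proof
    fix n
    show "z n = z' n"
    proof (cases "n < B")
      case True then show ?thesis using zl zl' by (simp add: vanishes_below_def)
    next
      case False
      then have "n = B + int (nat (n - B))" by simp
      then show ?thesis using \<open>\<And>L. z (B + int L) = z' (B + int L)\<close> by metis
    qed
  qed
qed

lemma Qp_digit_less: "x \<in> Qp p \<Longrightarrow> x n < p"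
  by (simp add: Qp_def)

lemma finite_Qp_vanishes_below:
  assumes "finite A" "A \<subseteq> Qp p"
  shows "\<exists>B\<le>B0. \<forall>x\<in>A. vanishes_below x B"
  using assms
proof (induction A arbitrary: B0 rule: finite_induct)
  case empty then show ?case by auto
next
  case (insert a A)
  obtain N where "\<forall>n<N. a n = 0" using insert.prems unfolding Qp_def by blast
  then have N: "\<forall>B\<le>N. vanishes_below a B" unfolding vanishes_below_def by auto
  obtain B where B: "B \<le> min B0 N" "\<forall>x\<in>A. vanishes_below x B" using insert by (meson insert_subset)
  then show ?case using N by auto
qed

lemma Qp_if_vanishes_below: "(\<forall>n. x n < p) \<Longrightarrow> vanishes_below x B \<Longrightarrow> x \<in> Qp p"
  unfolding Qp_def vanishes_below_def by auto

lemma Qp_eq_if_pcong: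
  assumes p: "p > 0" and z: "z \<in> Qp p" "z' \<in> Qp p"
    and c: "\<And>k. pcong p k (ptrunc p z k) (ptrunc p z' k)"
  shows "z = z'"
proof -
  obtain B where B: "\<forall>x\<in>{z, z'}. vanishes_below x B" using finite_Qp_vanishes_below[of "{z, z'}" p 0] z by auto
  show ?thesis
  proof (rule digits_eqI[OF p _ _ _ _])
    show "\<forall>n. z n < p" "\<forall>n. z' n < p" using z by (auto simp: Qp_digit_less)
    show "vanishes_below z B" "vanishes_below z' B" using B by auto
    fix L
    have "pcong p (B + int L) (of_int (digit_block p B z L) * real p powi B) (of_int (digit_block p B z' L) * real p powi B)"
      using c[of "B + int L"] ptrunc_eq_digit_block[of z B p] ptrunc_eq_digit_block[of z' B p] B p by simp
    then show "int p ^ L dvd digit_block p B z L - digit_block p B z' L"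
      using pcong_scaledD[OF p, of B "B + int L"] by simp
  qed
qed

lemma ex_psub:
  assumes p: "p > 0" and xy: "x \<in> Qp p" "y \<in> Qp p"
  shows "\<exists>z\<in>Qp p. \<forall>k. pcong p k (ptrunc p z k) (ptrunc p x k - ptrunc p y k)"
proof -
  obtain B where B: "\<forall>w\<in>{x, y}. vanishes_below w B"
    using finite_Qp_vanishes_below[of "{x, y}" p 0] xy by auto
  define A where "A L = digit_block p B x L - digit_block p B y L" for L
  have A: "int p ^ L dvd A L' - A L" if "L \<le> L'" for L L'
  proof -
    have "A L' - A L = (digit_block p B x L' - digit_block p B x L) - (digit_block p B y L' - digit_block p B y L)"
      unfolding A_def by simp
    then show ?thesis using digit_block_dvd_diff[OF that] by (metis dvd_diff)
  qed
  obtain z where z: "\<forall>n. z n < p" "vanishes_below z B" "\<forall>L. int p ^ L dvd digit_block p B z L - A L"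
    using exists_digits_coherent[OF p A] by blast
  have "pcong p k (ptrunc p z k) (ptrunc p x k - ptrunc p y k)" for k
  proof -
    have "ptrunc p x k - ptrunc p y k = of_int (A (nat (k - B))) * real p powi B"
      using ptrunc_eq_digit_block[of x B p k] ptrunc_eq_digit_block[of y B p k] B p
      by (simp add: A_def algebra_simps)
    moreover have "ptrunc p z k = of_int (digit_block p B z (nat (k - B))) * real p powi B"
      using ptrunc_eq_digit_block[of z B p k] z p by simp
    ultimately show ?thesis using pcong_scaledI[OF p, of k B] z(3) by simp
  qed
  then show ?thesis using z Qp_if_vanishes_below by blast
qed

lemma psub:
  assumes "p > 0" "x \<in> Qp p" "y \<in> Qp p"
  shows "psub p x y \<in> Qp p" and "pcong p k (ptrunc p (psub p x y) k) (ptrunc p x k - ptrunc p y k)"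
proof -
  have "\<exists>!z. z \<in> Qp p \<and> (\<forall>k. pcong p k (ptrunc p z k) (ptrunc p x k - ptrunc p y k))"
  proof (rule ex_ex1I)
    show "\<exists>z. z \<in> Qp p \<and> (\<forall>k. pcong p k (ptrunc p z k) (ptrunc p x k - ptrunc p y k))"
      using ex_psub[OF assms] by blast
  next
    fix z w
    assume z: "z \<in> Qp p \<and> (\<forall>k. pcong p k (ptrunc p z k) (ptrunc p x k - ptrunc p y k))"
      and w: "w \<in> Qp p \<and> (\<forall>k. pcong p k (ptrunc p w k) (ptrunc p x k - ptrunc p y k))"
    show "z = w"
    proof (rule Qp_eq_if_pcong[OF assms(1)])
      fix k
      show "pcong p k (ptrunc p z k) (ptrunc p w k)" using z w by (meson pcong_sym pcong_trans)
    qed (use z w in auto)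
  qed
  from theI'[OF this] show "psub p x y \<in> Qp p"
    and "pcong p k (ptrunc p (psub p x y) k) (ptrunc p x k - ptrunc p y k)"
    unfolding psub_def by blast+
qed

lemma ex_pmul:
  assumes p: "p > 0" and xy: "x \<in> Qp p" "y \<in> Qp p"
  shows "\<exists>z\<in>Qp p. \<forall>k. \<exists>K. \<forall>K'\<ge>K. pcong p k (ptrunc p z k) (ptrunc p x K' * ptrunc p y K')"
proof -
  obtain B where B: "\<forall>w\<in>{x, y}. vanishes_below w B"
    using finite_Qp_vanishes_below[of "{x, y}" p 0] xy by auto
  define A where "A L = digit_block p B x L * digit_block p B y L" for L
  have A: "int p ^ L dvd A L' - A L" if "L \<le> L'" for L L'
    unfolding A_def by (rule digit_block_mult_dvd_diff[OF that])
  obtain z where z: "\<forall>n. z n < p" "vanishes_below z (B + B)"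
    "\<forall>L. int p ^ L dvd digit_block p (B + B) z L - A L"
    using exists_digits_coherent[OF p A] by blast
  have pp: "real p powi B * real p powi B = real p powi (B + B)"
    using p power_int_add[of "real p" B B] by simp
  have "pcong p k (ptrunc p z k) (ptrunc p x K' * ptrunc p y K')"
    if K': "B + int (nat (k - (B + B))) \<le> K'" for k K'
  proof -
    define L L' where "L = nat (k - (B + B))" and "L' = nat (K' - B)"
    have "ptrunc p x K' * ptrunc p y K' = of_int (A L') * real p powi (B + B)"
      using ptrunc_eq_digit_block[of x B p K'] ptrunc_eq_digit_block[of y B p K'] B p pp
      by (simp add: A_def L'_def algebra_simps)
    moreover have "ptrunc p z k = of_int (digit_block p (B + B) z L) * real p powi (B + B)"
      using ptrunc_eq_digit_block[of z "B + B" p k] z p by (simp add: L_def)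
    moreover have "int p ^ L dvd digit_block p (B + B) z L - A L'"
    proof -
      have "L \<le> L'" using K' unfolding L_def L'_def by (intro nat_mono) (auto split: if_splits)
      moreover have "digit_block p (B + B) z L - A L' = (digit_block p (B + B) z L - A L) - (A L' - A L)"
        by simp
      ultimately show ?thesis using z(3) A by (metis dvd_diff)
    qed
    ultimately show ?thesis using pcong_scaledI[OF p, of k "B + B"] by (simp add: L_def)
  qed
  then show ?thesis using z Qp_if_vanishes_below by blast
qed

lemma pmul:
  assumes "p > 0" "x \<in> Qp p" "y \<in> Qp p"
  shows "\<exists>K. \<forall>K'\<ge>K. pcong p k (ptrunc p (pmul p x y) k) (ptrunc p x K' * ptrunc p y K')"
proof -
  let ?approx = "\<lambda>z. \<forall>k. \<exists>K. \<forall>K'\<ge>K. pcong p k (ptrunc p z k) (ptrunc p x K' * ptrunc p y K')"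
  have "\<exists>!z. z \<in> Qp p \<and> ?approx z"
  proof (rule ex_ex1I)
    show "\<exists>z. z \<in> Qp p \<and> ?approx z" using ex_pmul[OF assms] by blast
  next
    fix z w assume z: "z \<in> Qp p \<and> ?approx z" and w: "w \<in> Qp p \<and> ?approx w"
    show "z = w"
    proof (rule Qp_eq_if_pcong[OF assms(1)])
      fix k
      obtain K1 K2 where
        "\<forall>K'\<ge>K1. pcong p k (ptrunc p z k) (ptrunc p x K' * ptrunc p y K')"
        "\<forall>K'\<ge>K2. pcong p k (ptrunc p w k) (ptrunc p x K' * ptrunc p y K')"
        using z w by blast
      then show "pcong p k (ptrunc p z k) (ptrunc p w k)"
        by (meson max.cobounded1 max.cobounded2 pcong_sym pcong_trans)
    qed (use z w in auto)
  qed
  from theI'[OF this] show ?thesis unfolding pmul_def by blast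
qed

section \<open>Valuations and characters\<close>

definition first_diff :: "(int \<Rightarrow> nat) \<Rightarrow> (int \<Rightarrow> nat) \<Rightarrow> int" where
  "first_diff x y = (THE n. x n \<noteq> y n \<and> (\<forall>m<n. x m = y m))"

lemma first_diff_eqI:
  assumes "x n \<noteq> y n" "\<forall>m<n. x m = y m"
  shows "first_diff x y = n"
  unfolding first_diff_def
proof (rule the_equality)
  show "x n \<noteq> y n \<and> (\<forall>m<n. x m = y m)" using assms by blast
  fix n' assume n': "x n' \<noteq> y n' \<and> (\<forall>m<n'. x m = y m)"
  show "n' = n"
  proof (rule ccontr)
    assume "n' \<noteq> n"
    then have "n' < n \<or> n < n'" by linarith
    then show False using n' assms by blast
  qed
qed

lemma first_diff:
  assumes "vanishes_below x B" "vanishes_below y B" "x \<noteq> y"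
  shows "B \<le> first_diff x y \<and> x (first_diff x y) \<noteq> y (first_diff x y) \<and> (\<forall>m<first_diff x y. x m = y m)"
proof -
  obtain n where n: "x n \<noteq> y n" using assms(3) by blast
  have nB: "B \<le> n" using n assms(1,2) unfolding vanishes_below_def by (cases "n < B") auto
  define k where "k = (LEAST k::nat. x (B + int k) \<noteq> y (B + int k))"
  have ex: "x (B + int (nat (n - B))) \<noteq> y (B + int (nat (n - B)))" using n nB by simp
  have k: "x (B + int k) \<noteq> y (B + int k)"
    unfolding k_def by (rule LeastI[where P = "\<lambda>k. x (B + int k) \<noteq> y (B + int k)", OF ex])
  have below: "\<forall>m<B + int k. x m = y m"
  proof (intro allI impI)
    fix m assume m: "m < B + int k"
    show "x m = y m"
    proof (cases "m < B")
      case True then show ?thesis using assms(1,2) by (simp add: vanishes_below_def)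
    next
      case False
      then have "nat (m - B) < k" using m by simp
      then have "x (B + int (nat (m - B))) = y (B + int (nat (m - B)))"
        using not_less_Least[of "nat (m - B)" "\<lambda>k. x (B + int k) \<noteq> y (B + int k)"] unfolding k_def by blast
      then show ?thesis using False by simp
    qed
  qed
  have "first_diff x y = B + int k" using first_diff_eqI[OF k below] .
  then show ?thesis using k below by simp
qed

lemma first_diff_le:
  assumes "vanishes_below x B" "vanishes_below y B" "x n \<noteq> y n"
  shows "first_diff x y \<le> n"
proof (rule ccontr)
  assume "\<not> first_diff x y \<le> n"
  then have "n < first_diff x y" by simp
  moreover have "x \<noteq> y" using assms(3) by auto
  ultimately have "x n = y n" using first_diff[OF assms(1,2)] by blast
  then show False using assms(3) by simp
qed

lemma pval_eqI:
  assumes "z n \<noteq> 0" "\<forall>m<n. z m = 0"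
  shows "pval z = n"
  unfolding pval_def
proof (rule the_equality)
  show "z n \<noteq> 0 \<and> (\<forall>m<n. z m = 0)" using assms by blast
  fix n' assume n': "z n' \<noteq> 0 \<and> (\<forall>m<n'. z m = 0)"
  show "n' = n"
  proof (rule ccontr)
    assume "n' \<noteq> n"
    then have "n' < n \<or> n < n'" by linarith
    then show False using n' assms by auto
  qed
qed

lemma digit_diff_not_dvd:
  assumes "a < p" "b < p" "a \<noteq> b"
  shows "\<not> int p dvd int a - int b"
proof
  assume "int p dvd int a - int b"
  moreover have "int a - int b \<noteq> 0" "\<bar>int a - int b\<bar> < int p" using assms by auto
  ultimately show False using dvd_imp_le_int[of "int a - int b" "int p"] by simp
qed

lemma digit_block_psub_cong:
  assumes p: "p > 0" and xy: "x \<in> Qp p" "y \<in> Qp p"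
    and B: "\<forall>w\<in>{x, y, psub p x y}. vanishes_below w B"
  shows "int p ^ L dvd digit_block p B (psub p x y) L - (digit_block p B x L - digit_block p B y L)"
proof -
  let ?z = "psub p x y"
  have "pcong p (B + int L) (ptrunc p ?z (B + int L)) (ptrunc p x (B + int L) - ptrunc p y (B + int L))"
    by (rule psub(2)[OF p xy])
  then have "pcong p (B + int L) (of_int (digit_block p B ?z L) * real p powi B)
      (of_int (digit_block p B x L - digit_block p B y L) * real p powi B)"
    using ptrunc_eq_digit_block[of ?z B p] ptrunc_eq_digit_block[of x B p]
      ptrunc_eq_digit_block[of y B p] B p
    by (simp add: algebra_simps)
  then show ?thesis using pcong_scaledD[OF p, of B "B + int L"] by simp
qed

lemma pval_psub:
  assumes p: "prime p" and xy: "x \<in> Qp p" "y \<in> Qp p" "x \<noteq> y"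
  shows "pval (psub p x y) = first_diff x y"
proof -
  have p0: "p > 0" using p prime_gt_0_nat by blast
  define z where "z = psub p x y"
  have zQ: "z \<in> Qp p" unfolding z_def by (rule psub(1)[OF p0 xy(1,2)])
  obtain B where B: "\<forall>w\<in>{x, y, z}. vanishes_below w B"
    using finite_Qp_vanishes_below[of "{x, y, z}" p 0] xy zQ by auto
  define d where "d = first_diff x y"
  have d: "B \<le> d" "x d \<noteq> y d" "\<forall>m<d. x m = y m"
    using first_diff[of x B y] B xy unfolding d_def by auto
  define L where "L = nat (d - B)"
  have dL: "d = B + int L" using d unfolding L_def by simp
  have same_block: "digit_block p B x L = digit_block p B y L"
    by (rule digit_block_cong) (use d dL in auto)
  have cong: "int p ^ L' dvd digit_block p B z L' - (digit_block p B x L' - digit_block p B y L')" for L'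
    using digit_block_psub_cong[OF p0 xy(1,2)] B unfolding z_def by blast
  have "digit_block p B z L = 0"
    using cong[of L] eq_of_dvd_diff_bounded[of "digit_block p B z L" "int p ^ L" 0]
      digit_block_nonneg[of p B z L] digit_block_less[of z p B L] zQ p0
    by (simp add: same_block Qp_digit_less)
  then have z_window: "z (B + int i) = 0" if "i < L" for i
    using digit_block_eq_0_digit p0 that by blast
  have z_below: "\<forall>m<d. z m = 0"
  proof (intro allI impI)
    fix m assume "m < d"
    show "z m = 0"
    proof (cases "m < B")
      case True
      then show ?thesis using B by (simp add: vanishes_below_def)
    next
      case False
      then have "nat (m - B) < L" "m = B + int (nat (m - B))" using \<open>m < d\<close> dL by auto
      then show ?thesis using z_window by metis
    qed
  qed
  have "int p ^ L * int p dvd int p ^ L * (int (z d) - (int (x d) - int (y d)))"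
    using cong[of "Suc L"] \<open>digit_block p B z L = 0\<close> same_block dL
    by (simp add: digit_block_Suc algebra_simps)
  then have "int p dvd int (z d) - (int (x d) - int (y d))" using p0 by simp
  then have "z d \<noteq> 0"
    using digit_diff_not_dvd[of "x d" p "y d"] d(2) xy by (auto simp: Qp_digit_less dvd_diff_commute)
  then show ?thesis unfolding z_def[symmetric] d_def[symmetric] using pval_eqI z_below by blast
qed

definition first_diffs :: "(int \<Rightarrow> nat) set \<Rightarrow> int set" where
  "first_diffs X = {first_diff x y | x y. x \<in> X \<and> y \<in> X \<and> x \<noteq> y}"

lemma admissible_orders_eq_first_diffs:
  assumes "prime p" "F \<subseteq> Qp p"
  shows "admissible_orders p F = first_diffs F"
proof -
  have eq: "pval (psub p x y) = first_diff x y" if "x \<in> F" "y \<in> F" "x \<noteq> y" for x y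
    using pval_psub[OF assms(1)] assms(2) that by blast
  show ?thesis unfolding admissible_orders_def first_diffs_def
    by (intro Collect_cong ex_cong1) (auto simp: eq)
qed

lemma cis_pcong_0: "pcong p 0 a b \<Longrightarrow> cis (2 * pi * a) = cis (2 * pi * b)"
proof -
  assume "pcong p 0 a b"
  then obtain m :: int where "a = b + of_int m" by (auto simp: pcong_def algebra_simps)
  then show ?thesis by (simp add: distrib_left cis_mult[symmetric] cis_multiple_2pi)
qed

lemma pchi_y_eq_unity_root:
  assumes p: "prime p" and xy: "x \<in> Qp p" "y \<in> Qp p"
    and B: "vanishes_below x B" "vanishes_below y B" "B \<le> 0" and L: "nat (- 2 * B) \<le> L"
  shows "pchi_y p x y = unity_root (p ^ nat (- 2 * B)) (digit_block p B x L * digit_block p B y L)"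
proof -
  have p0: "p > 0" using p prime_gt_0_nat by blast
  define M where "M = nat (- 2 * B)"
  obtain K where K: "\<forall>K'\<ge>K. pcong p 0 (ptrunc p (pmul p x y) 0) (ptrunc p x K' * ptrunc p y K')"
    using pmul[OF p0 xy] by blast
  define L' where "L' = nat (max K (B + int L) - B)"
  have "L \<le> L'" unfolding L'_def by simp
  define S' where "S' = digit_block p B x L' * digit_block p B y L'"
  have "B + B = - int M" using B(3) by (simp add: M_def)
  then have "real p powi B * real p powi B = 1 / real (p ^ M)"
    using p0 by (simp add: power_int_add[symmetric] power_int_minus divide_inverse)
  moreover have "ptrunc p x (B + int L') * ptrunc p y (B + int L')
      = (real p powi B * real p powi B) * of_int S'"
    using ptrunc_eq_digit_block[OF B(1) p0] ptrunc_eq_digit_block[OF B(2) p0]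
    by (simp add: S'_def mult_ac)
  ultimately have "ptrunc p x (B + int L') * ptrunc p y (B + int L') = of_int S' / real (p ^ M)"
    by simp
  moreover have "B + int L' \<ge> K" unfolding L'_def by (auto simp: max_def)
  ultimately have "pchi_y p x y = unity_root (p ^ M) S'"
    using cis_pcong_0[OF K[rule_format, of "B + int L'"]]
    by (simp add: pchi_y_def pchi_def pfrac_def unity_root_def)
  also have "\<dots> = unity_root (p ^ M) (digit_block p B x L * digit_block p B y L)"
  proof (rule unity_root_cong)
    have "int (p ^ M) dvd int p ^ L" using L by (simp add: M_def le_imp_power_dvd)
    then show "int (p ^ M) dvd S' - digit_block p B x L * digit_block p B y L"
      unfolding S'_def using digit_block_mult_dvd_diff[OF \<open>L \<le> L'\<close>] by (rule dvd_trans)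
  qed (use p0 in simp)
  finally show ?thesis unfolding M_def .
qed

section \<open>Digit trees\<close>

definition full_split :: "nat \<Rightarrow> (int \<Rightarrow> nat) set \<Rightarrow> int \<Rightarrow> bool" where
  "full_split p X g \<longleftrightarrow> (\<forall>x\<in>X. \<forall>a<p. \<exists>y\<in>X. (\<forall>n<g. y n = x n) \<and> y g = a)"

lemma restrict_in_PiE_digits:
  assumes "X \<subseteq> Qp p" "x \<in> X"
  shows "restrict x J \<in> PiE J (\<lambda>_. {..<p})"
  using assms by (auto simp: Qp_digit_less)

lemma finite_first_diffs: "finite X \<Longrightarrow> finite (first_diffs X)"
proof -
  assume "finite X"
  then have "finite ((\<lambda>(x, y). first_diff x y) ` (X \<times> X))" by simp
  moreover have "first_diffs X \<subseteq> (\<lambda>(x, y). first_diff x y) ` (X \<times> X)"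
    unfolding first_diffs_def by auto
  ultimately show ?thesis by (rule finite_subset[rotated])
qed

lemma inj_on_restrict_first_diffs:
  assumes "\<forall>x\<in>X. vanishes_below x B" "first_diffs X \<subseteq> J"
  shows "inj_on (\<lambda>x. restrict x J) X"
proof (rule inj_onI, rule ccontr)
  fix x y assume xy: "x \<in> X" "y \<in> X" "restrict x J = restrict y J" "x \<noteq> y"
  have "first_diff x y \<in> J" using assms(2) xy unfolding first_diffs_def by blast
  moreover have "x (first_diff x y) \<noteq> y (first_diff x y)" using first_diff[of x B y] assms(1) xy by blast
  ultimately show False using xy(3) by (metis restrict_apply')
qed

lemma card_le_power_if_first_diffs_subset:
  assumes X: "finite X" "X \<subseteq> Qp p" "\<forall>x\<in>X. vanishes_below x B"
    and J: "finite J" "first_diffs X \<subseteq> J"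
  shows "card X \<le> p ^ card J"
proof -
  have "card X = card ((\<lambda>x. restrict x J) ` X)"
    using inj_on_restrict_first_diffs[OF X(3) J(2)] by (simp add: card_image)
  also have "\<dots> \<le> card (PiE J (\<lambda>_. {..<p}))"
  proof (rule card_mono)
    show "finite (PiE J (\<lambda>_. {..<p}))" using J(1) by (simp add: finite_PiE)
    show "(\<lambda>x. restrict x J) ` X \<subseteq> PiE J (\<lambda>_. {..<p})"
      using restrict_in_PiE_digits[OF X(2)] by blast
  qed
  also have "\<dots> = p ^ card J" using J(1) by (simp add: card_PiE)
  finally show ?thesis .
qed

text \<open>Induction on the prescribed levels from the top down: each level is adjusted without
  disturbing the lower digits, and the digits below all prescribed levels are those of \<open>c\<close>.\<close>

lemma full_split_prescribe_digits:
  assumes S: "finite S" and split: "\<forall>g\<in>S. full_split p X g" and c: "c \<in> X"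
    and a: "\<forall>g\<in>S. a g < p"
  shows "\<exists>e\<in>X. (\<forall>g\<in>S. e g = a g) \<and> (\<forall>n. (\<forall>g\<in>S. n < g) \<longrightarrow> e n = c n)"
  using S split a
proof (induction S rule: finite_linorder_max_induct)
  case empty
  then show ?case using c by auto
next
  case (insert b A)
  obtain e where e: "e \<in> X" "\<forall>g\<in>A. e g = a g" "\<forall>n. (\<forall>g\<in>A. n < g) \<longrightarrow> e n = c n"
    using insert.IH insert.prems by auto
  obtain y where y: "y \<in> X" "\<forall>n<b. y n = e n" "y b = a b"
    using insert.prems e(1) unfolding full_split_def by blast
  have "\<forall>g\<in>insert b A. y g = a g" using y e(2) insert.hyps(2) by auto
  moreover have "\<forall>n. (\<forall>g\<in>insert b A. n < g) \<longrightarrow> y n = c n" using y e(3) by auto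
  ultimately show ?case using y(1) by blast
qed

lemma PiE_subset_restrict_image:
  assumes S: "finite S" and split: "\<forall>g\<in>S. full_split p X g" and c: "c \<in> X"
  shows "PiE S (\<lambda>_. {..<p}) \<subseteq> (\<lambda>x. restrict x S) ` X"
proof
  fix a assume a: "a \<in> PiE S (\<lambda>_. {..<p})"
  then obtain e where e: "e \<in> X" "\<forall>g\<in>S. e g = a g"
    using full_split_prescribe_digits[OF S split c] by (metis PiE_mem lessThan_iff)
  have "restrict e S = a"
  proof
    fix g show "restrict e S g = a g"
      using e a by (cases "g \<in> S") (auto simp: PiE_def extensional_def)
  qed
  then show "a \<in> (\<lambda>x. restrict x S) ` X" using e(1) by blast
qed

lemma power_le_card_if_full_split:
  assumes X: "finite X" "X \<noteq> {}" and S: "finite S" and split: "\<forall>g\<in>S. full_split p X g"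
  shows "p ^ card S \<le> card X"
proof -
  obtain c where "c \<in> X" using X by blast
  have "p ^ card S = card (PiE S (\<lambda>_. {..<p}))" using S by (simp add: card_PiE)
  also have "\<dots> \<le> card ((\<lambda>x. restrict x S) ` X)"
    using PiE_subset_restrict_image[OF S split \<open>c \<in> X\<close>] X by (intro card_mono) auto
  also have "\<dots> \<le> card X" using X by (intro card_image_le) auto
  finally show ?thesis .
qed

lemma full_split_in_first_diffs:
  assumes "full_split p X g" "x \<in> X" "p \<ge> 2"
  shows "g \<in> first_diffs X"
proof -
  obtain a where a: "a < p" "a \<noteq> x g" using assms(3) by (metis less_2_cases_iff less_le_trans not_less_eq)
  then obtain y where y: "y \<in> X" "\<forall>n<g. y n = x n" "y g = a"
    using assms(1,2) unfolding full_split_def by blast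
  then have "first_diff x y = g" using a by (intro first_diff_eqI) auto
  moreover have "x \<noteq> y" using y a by auto
  ultimately show ?thesis using assms(2) y(1) unfolding first_diffs_def by blast
qed

lemma first_diffs_ge:
  assumes "\<forall>x\<in>X. vanishes_below x B" "d \<in> first_diffs X"
  shows "B \<le> d"
  using assms first_diff unfolding first_diffs_def by blast

lemma finite_if_finite_first_diffs:
  assumes X: "X \<subseteq> Qp p" and fin: "finite (first_diffs X)"
  shows "finite X"
proof (rule ccontr)
  assume "infinite X"
  then obtain Y where Y: "finite Y" "card Y = p ^ card (first_diffs X) + 1" "Y \<subseteq> X"
    using infinite_arbitrarily_large by blast
  obtain B where "\<forall>y\<in>Y. vanishes_below y B" using finite_Qp_vanishes_below[of Y p 0] Y X by auto
  moreover have "first_diffs Y \<subseteq> first_diffs X" using Y(3) unfolding first_diffs_def by blast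
  ultimately have "card Y \<le> p ^ card (first_diffs X)"
    using card_le_power_if_first_diffs_subset[OF Y(1) _ _ fin] Y(3) X by blast
  then show False using Y(2) by simp
qed

lemma bij_betw_restrict_first_diffs:
  assumes X: "finite X" "X \<subseteq> Qp p" "\<forall>x\<in>X. vanishes_below x B"
    and card: "card X = p ^ card (first_diffs X)"
  shows "bij_betw (\<lambda>x. restrict x (first_diffs X)) X (PiE (first_diffs X) (\<lambda>_. {..<p}))"
proof -
  let ?I = "first_diffs X"
  have inj: "inj_on (\<lambda>x. restrict x ?I) X" using inj_on_restrict_first_diffs[OF X(3)] by blast
  have "(\<lambda>x. restrict x ?I) ` X = PiE ?I (\<lambda>_. {..<p})"
  proof (rule card_subset_eq)
    show "finite (PiE ?I (\<lambda>_. {..<p}))" using finite_first_diffs[OF X(1)] by (simp add: finite_PiE)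
    show "(\<lambda>x. restrict x ?I) ` X \<subseteq> PiE ?I (\<lambda>_. {..<p})" using restrict_in_PiE_digits[OF X(2)] by blast
    show "card ((\<lambda>x. restrict x ?I) ` X) = card (PiE ?I (\<lambda>_. {..<p}))"
      using card_image[OF inj] card finite_first_diffs[OF X(1)] by (simp add: card_PiE)
  qed
  then show ?thesis using inj unfolding bij_betw_def by blast
qed

definition digit_box :: "nat \<Rightarrow> int set \<Rightarrow> (int \<Rightarrow> nat) set" where
  "digit_box p J = {l. (\<forall>n. l n < p) \<and> (\<forall>n. n \<notin> J \<longrightarrow> l n = 0)}"

lemma digit_box_vanishes_below: "\<forall>n\<in>J. B \<le> n \<Longrightarrow> l \<in> digit_box p J \<Longrightarrow> vanishes_below l B"
  unfolding digit_box_def vanishes_below_def by force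

lemma digit_box_subset_Qp: "\<forall>n\<in>J. B \<le> n \<Longrightarrow> digit_box p J \<subseteq> Qp p"
  using digit_box_vanishes_below Qp_if_vanishes_below unfolding digit_box_def by blast

lemma first_diffs_digit_box:
  assumes "\<forall>n\<in>J. B \<le> n"
  shows "first_diffs (digit_box p J) \<subseteq> J"
proof
  fix d assume "d \<in> first_diffs (digit_box p J)"
  then obtain x y where xy: "x \<in> digit_box p J" "y \<in> digit_box p J" "x \<noteq> y" "d = first_diff x y"
    unfolding first_diffs_def by blast
  then have "x d \<noteq> y d" using first_diff digit_box_vanishes_below[OF assms] by blast
  show "d \<in> J"
  proof (rule ccontr)
    assume "d \<notin> J"
    then have "x d = 0" "y d = 0" using xy(1,2) unfolding digit_box_def by auto
    then show False using \<open>x d \<noteq> y d\<close> by simp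
  qed
qed

lemma bij_betw_restrict_digit_box:
  assumes "p > 0"
  shows "bij_betw (\<lambda>x. restrict x J) (digit_box p J) (PiE J (\<lambda>_. {..<p}))"
proof (rule bij_betw_byWitness[where f' = "\<lambda>e n. if n \<in> J then e n else 0"])
  show "\<forall>a\<in>digit_box p J. (\<lambda>n. if n \<in> J then restrict a J n else 0) = a"
    unfolding digit_box_def by auto
  show "\<forall>a'\<in>PiE J (\<lambda>_. {..<p}). restrict (\<lambda>n. if n \<in> J then a' n else 0) J = a'"
    by (auto simp: PiE_def extensional_def)
  show "(\<lambda>x. restrict x J) ` digit_box p J \<subseteq> PiE J (\<lambda>_. {..<p})"
    unfolding digit_box_def by auto
  show "(\<lambda>e n. if n \<in> J then e n else 0) ` PiE J (\<lambda>_. {..<p}) \<subseteq> digit_box p J"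
    unfolding digit_box_def using assms by (auto simp: PiE_def Pi_def)
qed

lemma card_digit_box:
  assumes "p > 0" "finite J"
  shows "finite (digit_box p J)" and "card (digit_box p J) = p ^ card J"
  using bij_betw_finite[OF bij_betw_restrict_digit_box[OF assms(1)]]
    bij_betw_same_card[OF bij_betw_restrict_digit_box[OF assms(1)]] assms(2)
  by (simp_all add: finite_PiE card_PiE)

text \<open>By the cardinality assumption the restriction to the levels \<open>S\<close> is injective; but if \<open>c\<close> and \<open>d\<close> first differ at
  \<open>g \<notin> S\<close>, the element agreeing with \<open>c\<close> on the levels of \<open>S\<close> above \<open>g\<close> and with \<open>d\<close> below
  them has the same restriction as \<open>c\<close>.\<close>

lemma first_diffs_subset_if_card_eq:
  assumes X: "finite X" "X \<subseteq> Qp p" and S: "finite S" "\<forall>g\<in>S. full_split p X g"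
    and card: "card X = p ^ card S"
  shows "first_diffs X \<subseteq> S"
proof
  fix g assume "g \<in> first_diffs X"
  then obtain c d where cd: "c \<in> X" "d \<in> X" "c \<noteq> d" "first_diff c d = g"
    unfolding first_diffs_def by blast
  obtain B where "\<forall>x\<in>{c, d}. vanishes_below x B"
    using finite_Qp_vanishes_below[of "{c, d}" p 0] cd X(2) by auto
  then have cdg: "c g \<noteq> d g" "\<forall>m<g. c m = d m" using first_diff[of c B d] cd by auto
  have "(\<lambda>x. restrict x S) ` X = PiE S (\<lambda>_. {..<p})"
    using PiE_subset_restrict_image[OF S cd(1)] restrict_in_PiE_digits[OF X(2)] by blast
  then have inj: "inj_on (\<lambda>x. restrict x S) X"
    using card S(1) by (intro eq_card_imp_inj_on[OF X(1)]) (simp add: card_PiE)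
  show "g \<in> S"
  proof (rule ccontr)
    assume "g \<notin> S"
    define S' where "S' = {s\<in>S. g < s}"
    have "finite S'" "\<forall>s\<in>S'. full_split p X s" "\<forall>s\<in>S'. c s < p"
      using S X(2) cd(1) unfolding S'_def by (auto simp: Qp_digit_less)
    then obtain e where e: "e \<in> X" "\<forall>s\<in>S'. e s = c s" "\<forall>n. (\<forall>s\<in>S'. n < s) \<longrightarrow> e n = d n"
      using full_split_prescribe_digits[OF _ _ cd(2)] by blast
    have "restrict e S = restrict c S"
    proof
      fix s show "restrict e S s = restrict c S s"
      proof (cases "s \<in> S")
        case True
        moreover have "s \<noteq> g" using True \<open>g \<notin> S\<close> by blast
        ultimately have "s < g \<or> s \<in> S'" unfolding S'_def by auto
        then show ?thesis using e cdg(2) True unfolding S'_def by auto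
      qed simp
    qed
    then have "e = c" using inj e(1) cd(1) unfolding inj_on_def by blast
    moreover have "e g = d g" using e(3) unfolding S'_def by auto
    ultimately show False using cdg(1) by simp
  qed
qed

section \<open>Character sums over digit sets\<close>

lemma digit_block_diff_at_first_diff:
  assumes agree: "\<forall>m<d. x m = y m" and d: "B \<le> d" "d < B + int L"
  shows "\<exists>m. digit_block p B x L - digit_block p B y L
    = int p ^ nat (d - B) * (int (x d) - int (y d) + int p * m)"
proof -
  define i r where "i = nat (d - B)" and "r = L - i - 1"
  have L: "L = i + (1 + r)" and i: "B + int i = d" using d unfolding i_def r_def by linarith+
  have split: "digit_block p B z L
      = digit_block p B z i + int p ^ i * (int (z d) + int p * digit_block p (d + 1) z r)" for z
    unfolding L digit_block_add i digit_block_add[of p d z 1 r] by (simp add: digit_block_def)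
  have "digit_block p B x i = digit_block p B y i"
    by (rule digit_block_cong) (use agree i in auto)
  then have "digit_block p B x L - digit_block p B y L = int p ^ nat (d - B)
      * (int (x d) - int (y d) + int p * (digit_block p (d + 1) x r - digit_block p (d + 1) y r))"
    unfolding split[of x] split[of y] i_def[symmetric] by (simp add: algebra_simps)
  then show ?thesis by blast
qed

lemma scaled_digit_block_diff_cong:
  fixes G u m :: int
  assumes G: "G = int p ^ e * (u + int p * m)" and k: "e + nat (g - B) = k"
    and agree: "\<forall>n<g. x n = y n" and g: "B \<le> g" "g < B + int L"
  shows "int p ^ Suc k dvd G * digit_block p B x L - G * digit_block p B y L
    - int p ^ k * u * (int (x g) - int (y g))"
proof -
  obtain m' where m': "digit_block p B x L - digit_block p B y L
      = int p ^ nat (g - B) * (int (x g) - int (y g) + int p * m')"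
    using digit_block_diff_at_first_diff[OF agree g] by blast
  define \<delta> where "\<delta> = int (x g) - int (y g)"
  have "G * digit_block p B x L - G * digit_block p B y L - int p ^ k * u * \<delta>
      = int p ^ (e + nat (g - B)) * ((u + int p * m) * (\<delta> + int p * m')) - int p ^ k * u * \<delta>"
    unfolding G right_diff_distrib[symmetric] m' \<delta>_def by (simp add: power_add algebra_simps)
  also have "\<dots> = int p ^ Suc k * (m * \<delta> + u * m' + int p * m * m')"
    unfolding k by (simp add: algebra_simps)
  finally show ?thesis unfolding \<delta>_def by simp
qed

lemma scaled_digit_block_diff_not_dvd:
  fixes G u m :: int
  assumes p: "prime p" and G: "G = int p ^ e * (u + int p * m)" and u: "\<not> int p dvd u"
    and k: "e + nat (g - B) = k"
    and xy: "x \<in> Qp p" "y \<in> Qp p" "vanishes_below x B" "vanishes_below y B" "x \<noteq> y"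
    and d: "first_diff x y < g" and g: "g < B + int L"
  shows "\<not> int p ^ k dvd G * digit_block p B x L - G * digit_block p B y L"
proof
  assume dvd: "int p ^ k dvd G * digit_block p B x L - G * digit_block p B y L"
  define d where "d = first_diff x y"
  have d': "B \<le> d" "x d \<noteq> y d" "\<forall>m<d. x m = y m"
    using first_diff[OF xy(3-5)] unfolding d_def by auto
  obtain m' where m': "digit_block p B x L - digit_block p B y L
      = int p ^ nat (d - B) * (int (x d) - int (y d) + int p * m')"
    using digit_block_diff_at_first_diff[OF d'(3,1), of L] g d unfolding d_def by auto
  define W where "W = (u + int p * m) * (int (x d) - int (y d) + int p * m')"
  have "\<not> int p dvd int (x d) - int (y d)"
    using digit_diff_not_dvd d'(2) xy(1,2) by (simp add: Qp_digit_less)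
  then have W: "\<not> int p dvd W"
    using p u unfolding W_def by (simp add: prime_dvd_mult_iff dvd_add_left_iff)
  have "G * digit_block p B x L - G * digit_block p B y L = int p ^ (e + nat (d - B)) * W"
    unfolding G right_diff_distrib[symmetric] m' W_def by (simp add: power_add algebra_simps)
  moreover have "int p ^ Suc (e + nat (d - B)) dvd int p ^ k"
    using k d g d'(1) unfolding d_def by (intro le_imp_power_dvd) linarith
  then have "int p ^ Suc (e + nat (d - B)) dvd G * digit_block p B x L - G * digit_block p B y L"
    using dvd by (rule dvd_trans)
  ultimately have "int p ^ (e + nat (d - B)) * int p dvd int p ^ (e + nat (d - B)) * W"
    by (simp only: power_Suc2)
  then show False using W prime_gt_0_nat[OF p] by simp
qed

lemma add_1_mod_inj:
  fixes a b p :: nat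
  assumes "a < p" "b < p" "(a + 1) mod p = (b + 1) mod p"
  shows "a = b"
  using assms by (cases "a + 1 = p"; cases "b + 1 = p") (auto simp: less_Suc_eq)

lemma add_1_mod_neq:
  fixes a p :: nat
  assumes "2 \<le> p" "a < p"
  shows "(a + 1) mod p \<noteq> a"
  using assms by (cases "a + 1 = p") (auto simp: less_Suc_eq)

lemma bij_betw_rotate_digit:
  fixes p :: nat
  assumes "p > 0" "g \<in> J"
  shows "bij_betw (\<lambda>a. a(g := (a g + 1) mod p)) (PiE J (\<lambda>_. {..<p})) (PiE J (\<lambda>_. {..<p}))"
proof -
  let ?rot = "\<lambda>a. a(g := (a g + 1) mod p)" and ?P = "PiE J (\<lambda>_. {..<p})"
  have "?rot ` ?P \<subseteq> ?P" using assms by (auto simp: PiE_iff extensional_def)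
  moreover have "inj_on ?rot ?P"
  proof (rule inj_onI)
    fix a b assume ab: "a \<in> ?P" "b \<in> ?P" "?rot a = ?rot b"
    have "a g = b g"
      using add_1_mod_inj[of "a g" p "b g"] fun_cong[OF ab(3), of g] PiE_mem[OF ab(1) assms(2)]
        PiE_mem[OF ab(2) assms(2)] by simp
    then show "a = b" using fun_cong[OF ab(3)] by (metis fun_upd_other ext)
  qed
  moreover have "?P \<subseteq> ?rot ` ?P"
  proof
    fix b assume b: "b \<in> ?P"
    define a where "a = b(g := (b g + (p - 1)) mod p)"
    have "a \<in> ?P" using b assms unfolding a_def by (auto simp: PiE_iff extensional_def)
    have "((b g + (p - 1)) mod p + 1) mod p = (b g + (p - 1) + 1) mod p"
      by (rule mod_add_left_eq)
    also have "\<dots> = b g" using PiE_mem[OF b assms(2)] assms(1) by simp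
    finally have "?rot a = b" unfolding a_def by (simp add: fun_eq_iff)
    with \<open>a \<in> ?P\<close> show "b \<in> ?rot ` ?P" by blast
  qed
  ultimately show ?thesis unfolding bij_betw_def by blast
qed

lemma exists_digit_rotation:
  assumes p: "p \<ge> 2" and X: "\<forall>x\<in>X. vanishes_below x B"
    and bij: "bij_betw (\<lambda>x. restrict x J) X (PiE J (\<lambda>_. {..<p}))"
    and J: "first_diffs X \<subseteq> J" "g \<in> J"
  shows "\<exists>\<sigma>. bij_betw \<sigma> X X \<and> (\<forall>x\<in>X. \<sigma> x g = (x g + 1) mod p \<and> (\<forall>n<g. \<sigma> x n = x n))"
proof -
  define \<Phi> where "\<Phi> = (\<lambda>x::int \<Rightarrow> nat. restrict x J)"
  define \<sigma> where "\<sigma> = the_inv_into X \<Phi> \<circ> ((\<lambda>a. a(g := (a g + 1) mod p)) \<circ> \<Phi>)"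
  have bij': "bij_betw \<Phi> X (PiE J (\<lambda>_. {..<p}))" using bij unfolding \<Phi>_def .
  have \<sigma>: "bij_betw \<sigma> X X" unfolding \<sigma>_def
    using bij_betw_trans[OF bij_betw_trans[OF bij' bij_betw_rotate_digit[OF _ J(2)]]
        bij_betw_the_inv_into[OF bij']] p by simp
  have \<sigma>_digit: "\<sigma> x n = (if n = g then (x g + 1) mod p else x n)" if "x \<in> X" "n \<in> J" for x n
  proof -
    have "(\<lambda>a. a(g := (a g + 1) mod p)) (\<Phi> x) \<in> PiE J (\<lambda>_. {..<p})"
      using bij_betw_apply[OF bij_betw_rotate_digit[OF _ J(2)] bij_betw_apply[OF bij' that(1)]] p
      by simp
    then have "\<Phi> (\<sigma> x) = (\<Phi> x)(g := (\<Phi> x g + 1) mod p)"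
      unfolding \<sigma>_def using f_the_inv_into_f_bij_betw[OF bij'] by simp
    then have "\<Phi> (\<sigma> x) n = ((\<Phi> x)(g := (\<Phi> x g + 1) mod p)) n" by simp
    then show ?thesis using that(2) J(2) unfolding \<Phi>_def by (auto split: if_splits)
  qed
  have "\<forall>n<g. \<sigma> x n = x n" if x: "x \<in> X" for x
  proof -
    have "x g < p" using bij_betw_apply[OF bij x] J(2) by auto
    then have "\<sigma> x g \<noteq> x g" using \<sigma>_digit[OF x J(2)] add_1_mod_neq[OF p] by simp
    then have "\<sigma> x \<noteq> x" by auto
    define d where "d = first_diff (\<sigma> x) x"
    have "\<sigma> x \<in> X" using bij_betw_apply[OF \<sigma> x] .
    then have "d \<in> J" using J(1) x \<open>\<sigma> x \<noteq> x\<close> unfolding d_def first_diffs_def by blast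
    have d: "\<sigma> x d \<noteq> x d" "\<forall>m<d. \<sigma> x m = x m"
      using first_diff[of "\<sigma> x" B x] X \<open>\<sigma> x \<in> X\<close> x \<open>\<sigma> x \<noteq> x\<close> unfolding d_def by auto
    have "d = g"
    proof (rule ccontr)
      assume "d \<noteq> g"
      then show False using \<sigma>_digit[OF x \<open>d \<in> J\<close>] d(1) by simp
    qed
    then show ?thesis using d(2) by simp
  qed
  moreover have "\<sigma> x g = (x g + 1) mod p" if "x \<in> X" for x using \<sigma>_digit[OF that J(2)] by simp
  ultimately show ?thesis using \<sigma> by blast
qed

lemma int_add_1_mod_cong: "int p dvd int ((a + 1) mod p) - int a - 1"
proof -
  have "int p dvd (int a + 1) mod int p - (int a + 1)" by (simp add: mod_eq_dvd_iff[symmetric])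
  then show ?thesis by (simp add: zmod_int algebra_simps)
qed

lemma unity_root_sum_eq_0_of_rotation:
  assumes p: "prime p" and X: "finite X" and \<sigma>: "bij_betw \<sigma> X X"
    and \<sigma>_digit: "\<And>x. x \<in> X \<Longrightarrow> \<sigma> x g = (x g + 1) mod p \<and> (\<forall>n<g. \<sigma> x n = x n)"
    and cong: "\<And>x y. x \<in> X \<Longrightarrow> y \<in> X \<Longrightarrow> \<forall>n<g. x n = y n \<Longrightarrow>
      int p ^ Suc k dvd j x - j y - int p ^ k * u * (int (x g) - int (y g))"
    and u: "\<not> int p dvd u"
  shows "(\<Sum>x\<in>X. unity_root (p ^ Suc k) (j x)) = 0"
proof -
  define P where "P = p ^ Suc k"
  have P0: "P > 0" using prime_gt_0_nat[OF p] by (simp add: P_def)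
  define w where "w = unity_root P (int p ^ k * u)"
  have shift: "unity_root P (j (\<sigma> x)) = unity_root P (j x) * w" if x: "x \<in> X" for x
  proof -
    have "int p ^ Suc k dvd j (\<sigma> x) - j x - int p ^ k * u * (int (\<sigma> x g) - int (x g))"
      using cong[OF bij_betw_apply[OF \<sigma> x] x] \<sigma>_digit[OF x] by simp
    moreover obtain c where "int (\<sigma> x g) - int (x g) - 1 = int p * c"
      using int_add_1_mod_cong[of p "x g"] \<sigma>_digit[OF x] by (auto elim: dvdE)
    then have "int p ^ k * u * (int (\<sigma> x g) - int (x g)) - int p ^ k * u = int p ^ Suc k * (u * c)"
      by (simp add: algebra_simps)
    then have "int p ^ Suc k dvd int p ^ k * u * (int (\<sigma> x g) - int (x g)) - int p ^ k * u"
      by simp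
    ultimately have "int p ^ Suc k dvd (j (\<sigma> x) - j x - int p ^ k * u * (int (\<sigma> x g) - int (x g)))
        + (int p ^ k * u * (int (\<sigma> x g) - int (x g)) - int p ^ k * u)"
      by (rule dvd_add)
    then have "int P dvd j (\<sigma> x) - (j x + int p ^ k * u)"
      unfolding P_def by (simp add: algebra_simps)
    then show ?thesis unfolding w_def unity_root_add[symmetric] by (rule unity_root_cong[OF P0])
  qed
  define S where "S = (\<Sum>x\<in>X. unity_root P (j x))"
  have "S = (\<Sum>x\<in>X. unity_root P (j (\<sigma> x)))"
    unfolding S_def by (rule sum.reindex_bij_betw[OF \<sigma>, symmetric])
  also have "\<dots> = S * w" unfolding S_def sum_distrib_right by (rule sum.cong) (simp_all add: shift)
  finally have "S * (1 - w) = 0" by (simp add: algebra_simps)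
  moreover have "\<not> int P dvd int p ^ k * u"
    using u prime_gt_0_nat[OF p] by (simp add: P_def)
  then have "w \<noteq> 1" unfolding w_def using unity_root_eq_1_iff[OF P0] by blast
  ultimately show ?thesis unfolding S_def P_def by simp
qed

lemma unity_root_sum_eq_0_shift:
  assumes p: "prime p" and X: "finite X" and S: "(\<Sum>x\<in>X. unity_root (p ^ Suc k) (j x)) = 0"
    and x: "x \<in> X"
  shows "\<exists>y\<in>X. int (p ^ Suc k) dvd j y - (j x + int p ^ k * t)"
proof -
  define P q where "P = p ^ Suc k" and "q = p ^ k"
  have P0: "P > 0" and q0: "q > 0" and qP: "int q dvd int P"
    using prime_gt_0_nat[OF p] by (auto simp: P_def q_def)
  define h where "h x = nat (j x mod int P)" for x
  define n where "n r = int (card {x\<in>X. h x = r})" for r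
  have hP: "h x < P" and h: "int (h x) = j x mod int P" for x
    unfolding h_def using P0 by (simp_all add: nat_less_iff)
  have "(\<Sum>r<P. of_int (n r) * unity_root P (int r)) = (\<Sum>r<P. \<Sum>x\<in>{x\<in>X. h x = r}. unity_root P (h x))"
    unfolding n_def by (intro sum.cong refl) simp
  also have "\<dots> = (\<Sum>x\<in>X. unity_root P (h x))"
    by (rule sum.group) (use X hP in auto)
  also have "\<dots> = 0" using S unity_root_mod[OF P0] by (simp add: h P_def)
  finally have n: "n r = n (r mod q)" if "r < P" for r
    using unity_root_sum_eq_0_periodic[OF p _ that[unfolded P_def]] by (simp add: P_def q_def)
  define r where "r = nat ((j x + int q * t) mod int P)"
  have "r < P" and r: "int r = (j x + int q * t) mod int P"
    unfolding r_def using P0 by (simp_all add: nat_less_iff)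
  have "int (r mod q) = int (h x mod q)"
    unfolding of_nat_mod r h mod_mod_cancel[OF qP] by simp
  then have "n r = n (h x)" using n[OF \<open>r < P\<close>] n[OF hP] by simp
  moreover have "n (h x) > 0" using x X unfolding n_def by (auto simp: card_gt_0_iff)
  ultimately have "{y\<in>X. h y = r} \<noteq> {}" unfolding n_def by (metis card.empty of_nat_0 less_irrefl)
  then obtain y where y: "y \<in> X" "h y = r" by blast
  then have "j y mod int P = (j x + int q * t) mod int P" using h r by metis
  then show ?thesis using y(1) by (auto simp: P_def q_def mod_eq_dvd_iff)
qed

lemma full_split_of_unity_root_sum_eq_0:
  assumes p: "prime p" and X: "X \<subseteq> Qp p" "finite X" "\<forall>x\<in>X. vanishes_below x B"
    and cong: "\<And>x y. x \<in> X \<Longrightarrow> y \<in> X \<Longrightarrow> \<forall>n<g. x n = y n \<Longrightarrow>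
      int p ^ Suc k dvd j x - j y - int p ^ k * u * (int (x g) - int (y g))"
    and not_dvd: "\<And>x y. x \<in> X \<Longrightarrow> y \<in> X \<Longrightarrow> x \<noteq> y \<Longrightarrow> first_diff x y < g \<Longrightarrow>
      \<not> int p ^ k dvd j x - j y"
    and u: "\<not> int p dvd u"
    and S: "(\<Sum>x\<in>X. unity_root (p ^ Suc k) (j x)) = 0"
  shows "full_split p X g"
  unfolding full_split_def
proof (intro ballI allI impI)
  fix x a assume x: "x \<in> X" and a: "a < p"
  define t where "t = (u * (int a - int (x g))) mod int p"
  obtain y where y: "y \<in> X" and P_dvd: "int p ^ Suc k dvd j y - (j x + int p ^ k * t)"
    using unity_root_sum_eq_0_shift[OF p X(2) S x] by (auto simp: of_nat_power)
  have "int p ^ k dvd j y - (j x + int p ^ k * t)"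
    using le_imp_power_dvd[of k "Suc k" "int p"] P_dvd by (rule dvd_trans) simp
  then have "int p ^ k dvd (j y - (j x + int p ^ k * t)) + int p ^ k * t" by (rule dvd_add) simp
  then have "int p ^ k dvd j y - j x" by simp
  have agree: "\<forall>n<g. y n = x n"
  proof (rule ccontr)
    assume "\<not> (\<forall>n<g. y n = x n)"
    then obtain n where n: "n < g" "y n \<noteq> x n" by blast
    then have "first_diff y x < g" using first_diff_le[of y B x n] X(3) x y by simp
    then show False using not_dvd[OF y x] n(2) \<open>int p ^ k dvd j y - j x\<close> by auto
  qed
  have "int p ^ Suc k dvd (j y - j x - int p ^ k * u * (int (y g) - int (x g))) - (j y - (j x + int p ^ k * t))"
    using cong[OF y x agree] P_dvd by (rule dvd_diff)
  then have "int p ^ k * int p dvd int p ^ k * (t - u * (int (y g) - int (x g)))"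
    by (simp add: algebra_simps)
  then have "int p dvd t - u * (int (y g) - int (x g))" using prime_gt_0_nat[OF p] by simp
  moreover have "int p dvd u * (int a - int (x g)) - t"
    unfolding t_def by (simp add: minus_mod_eq_mult_div[symmetric])
  ultimately have "int p dvd (t - u * (int (y g) - int (x g))) + (u * (int a - int (x g)) - t)"
    by (rule dvd_add)
  then have "int p dvd u * (int a - int (y g))" by (simp add: algebra_simps)
  then have "int p dvd int a - int (y g)" using u p by (simp add: prime_dvd_mult_iff)
  moreover have "y g < p" using X(1) y by (auto simp: Qp_digit_less)
  ultimately have "y g = a" using digit_diff_not_dvd[OF a] by blast
  then show "\<exists>y\<in>X. (\<forall>n<g. y n = x n) \<and> y g = a" using y agree by blast
qed

lemma exists_vanishes_below_bound:
  assumes "finite A" "A \<subseteq> Qp p" "finite I"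
  shows "\<exists>B\<le>0. (\<forall>x\<in>A. vanishes_below x B) \<and> (\<forall>d\<in>I. d < - B)"
proof -
  obtain B where "B \<le> - Max (insert 0 I) - 1" "\<forall>x\<in>A. vanishes_below x B"
    using finite_Qp_vanishes_below[OF assms(1,2)] by blast
  moreover have "d \<le> Max (insert 0 I)" if "d \<in> I" for d using assms(3) that by simp
  moreover have "0 \<le> Max (insert 0 I)" using assms(3) by simp
  ultimately show ?thesis by (intro exI[of _ B]) force
qed

lemma pchi_y_mult_cnj_eq_unity_root:
  assumes p: "prime p" and Qp: "l \<in> Qp p" "l' \<in> Qp p" "x \<in> Qp p"
    and B: "vanishes_below l B" "vanishes_below l' B" "vanishes_below x B" "B \<le> 0"
  shows "pchi_y p l x * cnj (pchi_y p l' x) = unity_root (p ^ nat (- 2 * B))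
    ((digit_block p B l (nat (- 2 * B)) - digit_block p B l' (nat (- 2 * B)))
      * digit_block p B x (nat (- 2 * B)))"
  using pchi_y_eq_unity_root[OF p Qp(1,3) B(1,3,4) order.refl]
    pchi_y_eq_unity_root[OF p Qp(2,3) B(2,3,4) order.refl]
  by (simp add: unity_root_mult_cnj algebra_simps)

lemma pchi_y_commute:
  assumes p: "prime p" and xy: "x \<in> Qp p" "y \<in> Qp p"
  shows "pchi_y p x y = pchi_y p y x"
proof -
  obtain B where B: "B \<le> 0" "vanishes_below x B" "vanishes_below y B"
    using finite_Qp_vanishes_below[of "{x, y}" p 0] xy by auto
  then show ?thesis
    using pchi_y_eq_unity_root[OF p xy B(2,3,1) order.refl]
      pchi_y_eq_unity_root[OF p xy(2,1) B(3,2,1) order.refl]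
    by (simp add: mult.commute)
qed

lemma pchi_y_mult_cnj_self: "pchi_y p l x * cnj (pchi_y p l x) = 1"
  by (simp add: pchi_y_def pchi_def cis_cnj cis_mult)

lemma digit_block_diff_unit_form:
  assumes l: "l \<in> Qp p" "l' \<in> Qp p" "vanishes_below l B" "vanishes_below l' B" "l \<noteq> l'"
    and d: "first_diff l l' < B + int L"
  shows "\<exists>u m. digit_block p B l L - digit_block p B l' L
      = int p ^ nat (first_diff l l' - B) * (u + int p * m) \<and> \<not> int p dvd u"
proof -
  define d where "d = first_diff l l'"
  have d': "B \<le> d" "l d \<noteq> l' d" "\<forall>m<d. l m = l' m"
    using first_diff[OF l(3-5)] unfolding d_def by auto
  have "\<not> int p dvd int (l d) - int (l' d)"
    using digit_diff_not_dvd d'(2) l(1,2) by (simp add: Qp_digit_less)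
  then show ?thesis
    using digit_block_diff_at_first_diff[OF d'(3,1), of L] d unfolding d_def by blast
qed

text \<open>The exponent is \<open>j x = (N l - N l') N x\<close> for the digit blocks \<open>N\<close> of length \<open>-2B = k + 1\<close>.\<close>

lemma sum_pchi_y_mult_cnj_reduction:
  assumes p: "prime p" and X: "X \<subseteq> Qp p" "\<forall>x\<in>X. vanishes_below x B"
    and l: "l \<in> Qp p" "l' \<in> Qp p" "vanishes_below l B" "vanishes_below l' B" "l \<noteq> l'"
    and d: "first_diff l l' < - B" and g_eq: "g = - first_diff l l' - 1"
  obtains u k and j :: "(int \<Rightarrow> nat) \<Rightarrow> int" where "\<not> int p dvd u"
    and "\<And>x y. x \<in> X \<Longrightarrow> y \<in> X \<Longrightarrow> \<forall>n<g. x n = y n \<Longrightarrow>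
      int p ^ Suc k dvd j x - j y - int p ^ k * u * (int (x g) - int (y g))"
    and "\<And>x y. x \<in> X \<Longrightarrow> y \<in> X \<Longrightarrow> x \<noteq> y \<Longrightarrow> first_diff x y < g \<Longrightarrow>
      \<not> int p ^ k dvd j x - j y"
    and "(\<Sum>x\<in>X. pchi_y p l x * cnj (pchi_y p l' x)) = (\<Sum>x\<in>X. unity_root (p ^ Suc k) (j x))"
proof -
  define d L k where "d = first_diff l l'" and "L = nat (- 2 * B)"
    and "k = nat (d - B) + nat (g - B)"
  have dB: "B \<le> d" using first_diff[OF l(3-5)] unfolding d_def by auto
  then have B: "B \<le> 0" "L = Suc k" using d unfolding L_def k_def g_eq d_def by simp_all
  obtain u m where G: "digit_block p B l L - digit_block p B l' L = int p ^ nat (d - B) * (u + int p * m)"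
    and u: "\<not> int p dvd u"
    using digit_block_diff_unit_form[OF l, of L] d B(1) unfolding d_def L_def by auto
  define j where "j x = (digit_block p B l L - digit_block p B l' L) * digit_block p B x L" for x
  have g: "B \<le> g" "g < B + int L" using dB d unfolding g_eq d_def L_def by auto
  show thesis
  proof (rule that[OF u, of k j])
    fix x y assume "x \<in> X" "y \<in> X" "\<forall>n<g. x n = y n"
    then show "int p ^ Suc k dvd j x - j y - int p ^ k * u * (int (x g) - int (y g))"
      unfolding j_def using scaled_digit_block_diff_cong[OF G k_def[symmetric] _ g] by blast
  next
    fix x y assume xy: "x \<in> X" "y \<in> X" "x \<noteq> y" "first_diff x y < g"
    then show "\<not> int p ^ k dvd j x - j y"
      unfolding j_def
      using scaled_digit_block_diff_not_dvd[OF p G u k_def[symmetric] _ _ _ _ xy(3,4) g(2)] X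
      by blast
  next
    show "(\<Sum>x\<in>X. pchi_y p l x * cnj (pchi_y p l' x)) = (\<Sum>x\<in>X. unity_root (p ^ Suc k) (j x))"
      using pchi_y_mult_cnj_eq_unity_root[OF p l(1,2) _ l(3,4) _ B(1)] X
      unfolding j_def B(2)[symmetric] L_def by (intro sum.cong) auto
  qed
qed

lemma sum_pchi_y_mult_cnj_eq_0:
  assumes p: "prime p" and X: "finite X" "X \<subseteq> Qp p" "\<forall>x\<in>X. vanishes_below x B"
    and bij: "bij_betw (\<lambda>x. restrict x J) X (PiE J (\<lambda>_. {..<p}))" and J: "first_diffs X \<subseteq> J"
    and l: "l \<in> Qp p" "l' \<in> Qp p" "vanishes_below l B" "vanishes_below l' B" "l \<noteq> l'"
    and d: "first_diff l l' < - B" "- first_diff l l' - 1 \<in> J"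
  shows "(\<Sum>x\<in>X. pchi_y p l x * cnj (pchi_y p l' x)) = 0"
proof -
  define g where "g = - first_diff l l' - 1"
  obtain \<sigma> where \<sigma>: "bij_betw \<sigma> X X" "\<And>x. x \<in> X \<Longrightarrow> \<sigma> x g = (x g + 1) mod p \<and> (\<forall>n<g. \<sigma> x n = x n)"
    using exists_digit_rotation[OF prime_ge_2_nat[OF p] X(3) bij J d(2)[folded g_def]] by auto
  show ?thesis
  proof (rule sum_pchi_y_mult_cnj_reduction[OF p X(2,3) l d(1) g_def])
    fix u k j assume u: "\<not> int p dvd u"
      and cong: "\<And>x y. x \<in> X \<Longrightarrow> y \<in> X \<Longrightarrow> \<forall>n<g. x n = y n \<Longrightarrow>
        int p ^ Suc k dvd j x - j y - int p ^ k * u * (int (x g) - int (y g))"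
      and sum_eq: "(\<Sum>x\<in>X. pchi_y p l x * cnj (pchi_y p l' x)) = (\<Sum>x\<in>X. unity_root (p ^ Suc k) (j x))"
    from unity_root_sum_eq_0_of_rotation[where j = j, OF p X(1) \<sigma> cong u] show ?thesis
      unfolding sum_eq .
  qed
qed

lemma full_split_of_sum_pchi_y_mult_cnj_eq_0:
  assumes p: "prime p" and X: "finite X" "X \<subseteq> Qp p" "\<forall>x\<in>X. vanishes_below x B"
    and l: "l \<in> Qp p" "l' \<in> Qp p" "vanishes_below l B" "vanishes_below l' B" "l \<noteq> l'"
    and d: "first_diff l l' < - B"
    and S: "(\<Sum>x\<in>X. pchi_y p l x * cnj (pchi_y p l' x)) = 0"
  shows "full_split p X (- first_diff l l' - 1)"
proof (rule sum_pchi_y_mult_cnj_reduction[OF p X(2,3) l d refl])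
  fix u k j assume u: "\<not> int p dvd u"
    and cong: "\<And>x y. x \<in> X \<Longrightarrow> y \<in> X \<Longrightarrow> \<forall>n < - first_diff l l' - 1. x n = y n \<Longrightarrow>
      int p ^ Suc k dvd j x - j y - int p ^ k * u *
        (int (x (- first_diff l l' - 1)) - int (y (- first_diff l l' - 1)))"
    and not_dvd: "\<And>x y. x \<in> X \<Longrightarrow> y \<in> X \<Longrightarrow> x \<noteq> y \<Longrightarrow> first_diff x y < - first_diff l l' - 1 \<Longrightarrow>
      \<not> int p ^ k dvd j x - j y"
    and sum_eq: "(\<Sum>x\<in>X. pchi_y p l x * cnj (pchi_y p l' x)) = (\<Sum>x\<in>X. unity_root (p ^ Suc k) (j x))"
  have "(\<Sum>x\<in>X. unity_root (p ^ Suc k) (j x)) = 0" using S sum_eq by simp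
  from full_split_of_unity_root_sum_eq_0[OF p X(2,1,3) cong not_dvd u this] show ?thesis .
qed

section \<open>Spectra\<close>

lemma sum_mult_delta:
  fixes f :: "'a \<Rightarrow> 'b::semiring_0"
  assumes "finite A" "x \<in> A"
  shows "(\<Sum>y\<in>A. f y * (if y = x then c else 0)) = f x * c"
  using assms by (simp add: if_distrib[of "\<lambda>t. f _ * t"] sum.delta' cong: if_cong)

lemma spectral_unifI:
  assumes F: "finite F" "F \<noteq> {}" and \<Lambda>: "\<Lambda> \<subseteq> Qp p" "finite \<Lambda>"
    and orth: "\<And>\<mu> \<nu>. \<mu> \<in> \<Lambda> \<Longrightarrow> \<nu> \<in> \<Lambda> \<Longrightarrow>
      (\<Sum>x\<in>F. pchi_y p \<mu> x * cnj (pchi_y p \<nu> x)) = (if \<mu> = \<nu> then of_nat (card F) else 0)"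
    and dual: "\<And>x y. x \<in> F \<Longrightarrow> y \<in> F \<Longrightarrow>
      (\<Sum>\<mu>\<in>\<Lambda>. pchi_y p \<mu> x * cnj (pchi_y p \<mu> y)) = (if x = y then of_nat (card F) else 0)"
  shows "spectral_unif p F"
proof -
  have nF: "of_nat (card F) \<noteq> (0 :: complex)" using F by simp
  have expansion: "f x = (\<Sum>\<mu>\<in>\<Lambda>. unif_inner F f (pchi_y p \<mu>) * pchi_y p \<mu> x)"
    if x: "x \<in> F" for f x
  proof -
    have "unif_inner F f (pchi_y p \<mu>) * pchi_y p \<mu> x
        = (\<Sum>y\<in>F. f y * (pchi_y p \<mu> x * cnj (pchi_y p \<mu> y))) / of_nat (card F)" for \<mu>
      unfolding unif_inner_def times_divide_eq_left sum_distrib_right by (simp add: mult_ac)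
    then have "(\<Sum>\<mu>\<in>\<Lambda>. unif_inner F f (pchi_y p \<mu>) * pchi_y p \<mu> x)
        = (\<Sum>\<mu>\<in>\<Lambda>. \<Sum>y\<in>F. f y * (pchi_y p \<mu> x * cnj (pchi_y p \<mu> y))) / of_nat (card F)"
      by (simp add: sum_divide_distrib)
    also have "\<dots> = (\<Sum>y\<in>F. f y * (\<Sum>\<mu>\<in>\<Lambda>. pchi_y p \<mu> x * cnj (pchi_y p \<mu> y))) / of_nat (card F)"
      by (subst sum.swap) (simp add: sum_distrib_left)
    also have "\<dots> = (\<Sum>y\<in>F. f y * (if y = x then of_nat (card F) else 0)) / of_nat (card F)"
      by (intro arg_cong2[where f = "(/)"] sum.cong refl) (auto simp: dual x)
    also have "\<dots> = f x"
      using sum_mult_delta[OF F(1) x, where f = f and c = "of_nat (card F)"] nF by simp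
    finally show ?thesis ..
  qed
  show ?thesis
    unfolding spectral_unif_def
  proof (intro exI[of _ \<Lambda>] conjI)
    show "\<Lambda> \<subseteq> Qp p" by (fact \<Lambda>(1))
    show "\<forall>\<mu>\<in>\<Lambda>. \<forall>\<nu>\<in>\<Lambda>. unif_inner F (pchi_y p \<mu>) (pchi_y p \<nu>) = (if \<mu> = \<nu> then 1 else 0)"
      using orth nF by (simp add: unif_inner_def)
    show "\<forall>f. \<exists>\<Lambda>0 c. finite \<Lambda>0 \<and> \<Lambda>0 \<subseteq> \<Lambda> \<and> (\<forall>x\<in>F. f x = (\<Sum>\<mu>\<in>\<Lambda>0. c \<mu> * pchi_y p \<mu> x))"
    proof
      fix f :: "(int \<Rightarrow> nat) \<Rightarrow> complex"
      show "\<exists>\<Lambda>0 c. finite \<Lambda>0 \<and> \<Lambda>0 \<subseteq> \<Lambda> \<and> (\<forall>x\<in>F. f x = (\<Sum>\<mu>\<in>\<Lambda>0. c \<mu> * pchi_y p \<mu> x))"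
        using expansion \<Lambda>(2)
        by (intro exI[of _ \<Lambda>] exI[of _ "\<lambda>\<mu>. unif_inner F f (pchi_y p \<mu>)"]) simp
    qed
  qed
qed

lemma coeff_eq_unif_inner:
  assumes F: "finite F" "F \<noteq> {}" and \<Lambda>0: "finite \<Lambda>0" "\<mu> \<in> \<Lambda>0"
    and orth: "\<forall>\<mu>\<in>\<Lambda>0. \<forall>\<nu>\<in>\<Lambda>0. unif_inner F (pchi_y p \<mu>) (pchi_y p \<nu>) = (if \<mu> = \<nu> then 1 else 0)"
    and f: "\<forall>x\<in>F. f x = (\<Sum>\<nu>\<in>\<Lambda>0. c \<nu> * pchi_y p \<nu> x)"
  shows "c \<mu> = unif_inner F f (pchi_y p \<mu>)"
proof -
  have "(\<Sum>x\<in>F. f x * cnj (pchi_y p \<mu> x))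
      = (\<Sum>x\<in>F. \<Sum>\<nu>\<in>\<Lambda>0. c \<nu> * (pchi_y p \<nu> x * cnj (pchi_y p \<mu> x)))"
    by (rule sum.cong) (simp_all add: f sum_distrib_right mult.assoc)
  then have "unif_inner F f (pchi_y p \<mu>)
      = (\<Sum>x\<in>F. \<Sum>\<nu>\<in>\<Lambda>0. c \<nu> * (pchi_y p \<nu> x * cnj (pchi_y p \<mu> x))) / of_nat (card F)"
    unfolding unif_inner_def by simp
  also have "\<dots> = (\<Sum>\<nu>\<in>\<Lambda>0. c \<nu> * unif_inner F (pchi_y p \<nu>) (pchi_y p \<mu>))"
    unfolding unif_inner_def sum_divide_distrib times_divide_eq_right sum_distrib_left
    by (subst sum.swap) simp
  also have "\<dots> = (\<Sum>\<nu>\<in>\<Lambda>0. c \<nu> * (if \<nu> = \<mu> then 1 else 0))"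
    using orth \<Lambda>0(2) by (intro sum.cong) auto
  also have "\<dots> = c \<mu>" using sum_mult_delta[OF \<Lambda>0, where f = c and c = 1] by simp
  finally show ?thesis ..
qed

lemma card_le_card_of_spectral_basis:
  assumes F: "finite F" "F \<noteq> {}" and "finite \<Lambda>"
    and orth: "\<forall>\<mu>\<in>\<Lambda>. \<forall>\<nu>\<in>\<Lambda>. unif_inner F (pchi_y p \<mu>) (pchi_y p \<nu>) = (if \<mu> = \<nu> then 1 else 0)"
    and compl: "\<forall>f. \<exists>\<Lambda>0 c. finite \<Lambda>0 \<and> \<Lambda>0 \<subseteq> \<Lambda> \<and> (\<forall>x\<in>F. f x = (\<Sum>\<mu>\<in>\<Lambda>0. c \<mu> * pchi_y p \<mu> x))"
  shows "card F \<le> card \<Lambda>"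
proof -
  obtain x0 where x0: "x0 \<in> F" using F by blast
  define f where "f x = (if x = x0 then 1 else 0 :: complex)" for x
  obtain \<Lambda>0 c where \<Lambda>0: "finite \<Lambda>0" "\<Lambda>0 \<subseteq> \<Lambda>" and f: "\<forall>x\<in>F. f x = (\<Sum>\<mu>\<in>\<Lambda>0. c \<mu> * pchi_y p \<mu> x)"
    using compl by blast
  have "c \<mu> * pchi_y p \<mu> x0 = 1 / of_nat (card F)" if "\<mu> \<in> \<Lambda>0" for \<mu>
  proof -
    have "c \<mu> = unif_inner F f (pchi_y p \<mu>)"
      using coeff_eq_unif_inner[OF F \<Lambda>0(1) that _ f] orth \<Lambda>0(2) by blast
    also have "\<dots> = cnj (pchi_y p \<mu> x0) / of_nat (card F)"
      unfolding unif_inner_def f_def using sum_mult_delta[OF F(1) x0, where f = "\<lambda>y. cnj (pchi_y p \<mu> y)" and c = 1]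
      by (simp add: mult.commute)
    finally show ?thesis using pchi_y_mult_cnj_self[of p \<mu> x0] by (simp add: mult.commute)
  qed
  then have "f x0 = of_nat (card \<Lambda>0) / (of_nat (card F) :: complex)"
    using f x0 by simp
  then have "1 = of_nat (card \<Lambda>0) / (of_nat (card F) :: complex)" by (simp add: f_def)
  then have "card \<Lambda>0 = card F" using F by (simp add: field_simps)
  then show ?thesis using card_mono[OF assms(3) \<Lambda>0(2)] by simp
qed

lemma spectral_unif_if_card_eq:
  assumes p: "prime p" and F: "finite F" "F \<noteq> {}" "F \<subseteq> Qp p"
    and card: "card F = p ^ card (first_diffs F)"
  shows "spectral_unif p F"
proof -
  define I where "I = first_diffs F"
  obtain B where B: "B \<le> 0" "\<forall>x\<in>F. vanishes_below x B" "\<forall>d\<in>I. d < - B"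
    using exists_vanishes_below_bound[OF F(1,3) finite_first_diffs[OF F(1)]] unfolding I_def by blast
  have I_ge: "B \<le> d" if "d \<in> I" for d using first_diffs_ge[OF B(2)] that unfolding I_def by blast
  define J where "J = (\<lambda>d. - d - 1) ` I"
  define \<Lambda> where "\<Lambda> = digit_box p J"
  have J_ge: "\<forall>n\<in>J. B \<le> n" using B(3) unfolding J_def by force
  have \<Lambda>: "\<Lambda> \<subseteq> Qp p" "\<forall>l\<in>\<Lambda>. vanishes_below l B" "first_diffs \<Lambda> \<subseteq> J"
    using digit_box_subset_Qp[OF J_ge] digit_box_vanishes_below[OF J_ge] first_diffs_digit_box[OF J_ge]
    unfolding \<Lambda>_def by blast+
  have bij_\<Lambda>: "bij_betw (\<lambda>x. restrict x J) \<Lambda> (PiE J (\<lambda>_. {..<p}))"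
    unfolding \<Lambda>_def using bij_betw_restrict_digit_box prime_gt_0_nat[OF p] by blast
  have "finite J" "card J = card I"
    using finite_first_diffs[OF F(1)] unfolding J_def I_def by (auto simp: card_image inj_on_def)
  then have fin_\<Lambda>: "finite \<Lambda>" and card_\<Lambda>: "card \<Lambda> = card F"
    using card_digit_box[OF prime_gt_0_nat[OF p]] card unfolding \<Lambda>_def I_def by simp_all
  have bij_F: "bij_betw (\<lambda>x. restrict x I) F (PiE I (\<lambda>_. {..<p}))"
    unfolding I_def by (rule bij_betw_restrict_first_diffs[OF F(1,3) B(2) card])
  show ?thesis
  proof (rule spectral_unifI[OF F(1,2) \<Lambda>(1) fin_\<Lambda>])
    fix \<mu> \<nu> assume \<mu>\<nu>: "\<mu> \<in> \<Lambda>" "\<nu> \<in> \<Lambda>"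
    show "(\<Sum>x\<in>F. pchi_y p \<mu> x * cnj (pchi_y p \<nu> x)) = (if \<mu> = \<nu> then of_nat (card F) else 0)"
    proof (cases "\<mu> = \<nu>")
      case False
      then have "first_diff \<mu> \<nu> \<in> J" using \<Lambda>(3) \<mu>\<nu> unfolding first_diffs_def by blast
      then obtain d where d: "d \<in> I" "first_diff \<mu> \<nu> = - d - 1" unfolding J_def by blast
      have "\<mu> \<in> Qp p" "\<nu> \<in> Qp p" "vanishes_below \<mu> B" "vanishes_below \<nu> B"
        using \<Lambda>(1,2) \<mu>\<nu> by auto
      moreover have "first_diff \<mu> \<nu> < - B" "- first_diff \<mu> \<nu> - 1 \<in> I" using d I_ge[OF d(1)] by simp_all
      ultimately show ?thesis
        using sum_pchi_y_mult_cnj_eq_0[OF p F(1,3) B(2) bij_F _ _ _ _ _ False] False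
        unfolding I_def by simp
    qed (simp add: pchi_y_mult_cnj_self)
  next
    fix x y assume xy: "x \<in> F" "y \<in> F"
    show "(\<Sum>\<mu>\<in>\<Lambda>. pchi_y p \<mu> x * cnj (pchi_y p \<mu> y)) = (if x = y then of_nat (card F) else 0)"
    proof (cases "x = y")
      case False
      have "(\<Sum>\<mu>\<in>\<Lambda>. pchi_y p \<mu> x * cnj (pchi_y p \<mu> y)) = (\<Sum>\<mu>\<in>\<Lambda>. pchi_y p x \<mu> * cnj (pchi_y p y \<mu>))"
        using pchi_y_commute[OF p] \<Lambda>(1) F(3) xy by (intro sum.cong) (auto simp: subset_iff)
      also have "\<dots> = 0"
      proof (rule sum_pchi_y_mult_cnj_eq_0[OF p fin_\<Lambda> \<Lambda>(1,2) bij_\<Lambda> \<Lambda>(3)])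
        have "first_diff x y \<in> I" using xy False unfolding I_def first_diffs_def by blast
        then show "first_diff x y < - B" "- first_diff x y - 1 \<in> J"
          using B(3) unfolding J_def by auto
      qed (use xy False F(3) B(2) in auto)
      finally show ?thesis using False by simp
    qed (simp add: pchi_y_mult_cnj_self card_\<Lambda>)
  qed
qed

lemma full_split_of_orthogonal:
  assumes p: "prime p" and F: "finite F" "F \<subseteq> Qp p"
    and l: "l \<in> Qp p" "l' \<in> Qp p" "l \<noteq> l'"
    and orth: "(\<Sum>x\<in>F. pchi_y p l x * cnj (pchi_y p l' x)) = 0"
  shows "full_split p F (- first_diff l l' - 1)"
proof -
  obtain B where B: "\<forall>x\<in>F \<union> {l, l'}. vanishes_below x B" "first_diff l l' < - B"
    using exists_vanishes_below_bound[of "F \<union> {l, l'}" p "{first_diff l l'}"] F l by auto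
  then have "\<forall>x\<in>F. vanishes_below x B" "vanishes_below l B" "vanishes_below l' B" by auto
  from full_split_of_sum_pchi_y_mult_cnj_eq_0[OF p F this(1) l(1,2) this(2,3) l(3) B(2) orth]
  show ?thesis .
qed

lemma card_eq_if_spectral_unif:
  assumes p: "prime p" and F: "finite F" "F \<noteq> {}" "F \<subseteq> Qp p" and sp: "spectral_unif p F"
  shows "card F = p ^ card (first_diffs F)"
proof -
  obtain \<Lambda> where \<Lambda>: "\<Lambda> \<subseteq> Qp p"
    and orth: "\<forall>\<mu>\<in>\<Lambda>. \<forall>\<nu>\<in>\<Lambda>. unif_inner F (pchi_y p \<mu>) (pchi_y p \<nu>) = (if \<mu> = \<nu> then 1 else 0)"
    and compl: "\<forall>f. \<exists>\<Lambda>0 c. finite \<Lambda>0 \<and> \<Lambda>0 \<subseteq> \<Lambda> \<and> (\<forall>x\<in>F. f x = (\<Sum>\<mu>\<in>\<Lambda>0. c \<mu> * pchi_y p \<mu> x))"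
    using sp unfolding spectral_unif_def by blast
  define S where "S = (\<lambda>d. - d - 1) ` first_diffs \<Lambda>"
  have split: "\<forall>g\<in>S. full_split p F g"
  proof
    fix g assume "g \<in> S"
    then obtain l l' where l: "l \<in> \<Lambda>" "l' \<in> \<Lambda>" "l \<noteq> l'" "g = - first_diff l l' - 1"
      unfolding S_def first_diffs_def by blast
    then have "unif_inner F (pchi_y p l) (pchi_y p l') = 0" using orth by simp
    then have "(\<Sum>x\<in>F. pchi_y p l x * cnj (pchi_y p l' x)) = 0"
      using F(1,2) by (simp add: unif_inner_def)
    then show "full_split p F g" using full_split_of_orthogonal[OF p F(1,3)] l \<Lambda> by blast
  qed
  obtain x0 where "x0 \<in> F" using F(2) by blast
  then have S_sub: "S \<subseteq> first_diffs F"
    using split full_split_in_first_diffs prime_ge_2_nat[OF p] by blast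
  then have fin_S: "finite S" using finite_first_diffs[OF F(1)] by (rule finite_subset)
  have inj: "inj_on (\<lambda>d. - d - 1) (first_diffs \<Lambda>)" by (auto simp: inj_on_def)
  then have "finite (first_diffs \<Lambda>)" "card S = card (first_diffs \<Lambda>)"
    using fin_S unfolding S_def by (auto dest: finite_imageD simp: card_image)
  then have fin_\<Lambda>: "finite \<Lambda>" and "card \<Lambda> \<le> p ^ card S"
    using finite_if_finite_first_diffs[OF \<Lambda>] finite_Qp_vanishes_below[of \<Lambda> p 0] \<Lambda>
      card_le_power_if_first_diffs_subset[of \<Lambda> p _ "first_diffs \<Lambda>"] by auto
  moreover have "p ^ card S \<le> card F" by (rule power_le_card_if_full_split[OF F(1,2) fin_S split])
  moreover have "card F \<le> card \<Lambda>" by (rule card_le_card_of_spectral_basis[OF F(1,2) fin_\<Lambda> orth compl])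
  ultimately have card: "card F = p ^ card S" by linarith
  then have "first_diffs F \<subseteq> S" by (rule first_diffs_subset_if_card_eq[OF F(1,3) fin_S split])
  then show ?thesis using S_sub card by simp
qed

theorem corollary1p5:
  fixes p :: nat and F :: "(int \<Rightarrow> nat) set"
  assumes "prime p" and "finite F" and "F \<noteq> {}" and "F \<subseteq> Qp p"
  shows "spectral_unif p F \<longleftrightarrow> card F = p ^ card (admissible_orders p F)"
  using spectral_unif_if_card_eq[OF assms] card_eq_if_spectral_unif[OF assms]
  unfolding admissible_orders_eq_first_diffs[OF assms(1,4)] by blast

end
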